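(* There is an absolute constant $C_{TS}>0$ such that the following holds. Let $\mathrm{ALG}$ be a BIC bandit algorithm such that by some fixed (deterministic) time $T_0$ it almost surely collects at least $$N_{TS}=C_{TS}\,\varepsilon_{TS}^{-2}\,\log(\delta_{TS}^{-1})$$ samples of each arm, where $\varepsilon_{TS}=\min_{i,j\in[K]}\mathbb E[(\mu_i-\mu_j)_+]$ and $\delta_{TS}=\min_{i\in[K]}\Pr[A^*=i]$. Then the algorithm that runs $\mathrm{ALG}$ for the first $T_0$ rounds and Thompson sampling in all subsequent rounds is BIC.
   Context: Incentivized exploration model: there are $K$ arms and rounds $t=1,2,\dots$. Each arm $i$ has an unknown mean reward $\mu_i\in[0,1]$; $\mu_1,\dots,\mu_K$ are drawn independently with $\mu_i\sim\mathcal P_i$, where the priors $\mathcal P_i$ (distributions on $[0,1]$) are known to everyone. Rewards are Bernoulli: given the means, each arm $i$ has an i.i.d. sequence of $\{0,1\}$-valued samples with mean $\mu_i$ (independent across arms), and the $n$-th time arm $i$ is chosen its $n$-th sample is the observed reward. In each round $t$ a (possibly randomized) algorithm recommends an arm $A_t$ based on the history; the agent of round $t$ chooses an arm $A'_t$, whose reward is observed by the algorithm only. Let $\mathcal E_{t-1}=\{A'_s=A_s \text{ for all } s<t\}$. The algorithm is BIC (Bayesian incentive-compatible) if for every round $t$ and all arms $i,j$ with $\Pr[A_t=i]>0$, $\mathbb E[\mu_i-\mu_j\mid A_t=i,\mathcal E_{t-1}]\geq 0$; agents then follow recommendations. $A^*=\min(\arg\max_j\mu_j)$ is the best arm. $\mathcal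 F_t$ is the $\sigma$-algebra generated by chosen arms and rewards before round $t$. Thompson sampling recommends in round $t$ an arm drawn from the conditional law of $A^*$ given $\mathcal F_t$, i.e. $\Pr[A_t=i\mid\mathcal F_t]=\Pr[A^*=i\mid\mathcal F_t]$. $(x)_+=\max(x,0)$. *)

theory Defs
  imports "HOL-Probability.Probability"
begin

text \<open>Arms are 0,...,K-1; rounds are 0,1,2,... (round t here = round t+1 of the paper).\<close>

type_synonym seed = "nat \<Rightarrow> real"
type_synonym hist = "(nat \<times> bool) list"
text \<open>A world: (means, reward-uniforms, internal randomness of the algorithm).\<close>
type_synonym omega = "(nat \<Rightarrow> real) \<times> ((nat \<times> nat) \<Rightarrow> real) \<times> seed"
type_synonym alg = "nat \<Rightarrow> hist \<Rightarrow> seed \<Rightarrow> nat"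

text \<open>The probability space: means drawn independently from the priors, independent
  uniform variables U(i,n) on [0,1] (the n-th sample of arm i is [U(i,n) < mu i], so given
  the means the samples are i.i.d. Bernoulli(mu i), independent across arms), and the
  algorithm's internal randomness drawn from S independently of everything else.\<close>
definition world :: "nat \<Rightarrow> (nat \<Rightarrow> real measure) \<Rightarrow> seed measure \<Rightarrow> omega measure" where
  "world K P S = (PiM {..<K} P) \<Otimes>\<^sub>M
      ((PiM ({..<K} \<times> UNIV) (\<lambda>_. uniform_measure lborel {0..1::real})) \<Otimes>\<^sub>M S)"

definition mean :: "omega \<Rightarrow> nat \<Rightarrow> real" where
  "mean \<omega> i = fst \<omega> i"

text \<open>The n-th (0-indexed) sample of arm i.\<close>
definition reward :: "omega \<Rightarrow> nat \<Rightarrow> nat \<Rightarrow> bool" where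
  "reward \<omega> i n = (fst (snd \<omega>) (i, n) < fst \<omega> i)"

definition seed_of :: "omega \<Rightarrow> seed" where
  "seed_of \<omega> = snd (snd \<omega>)"

text \<open>History (chosen arms and observed rewards) before round t, when agents follow the
  recommendations.\<close>
fun history :: "alg \<Rightarrow> omega \<Rightarrow> nat \<Rightarrow> hist" where
  "history A \<omega> 0 = []"
| "history A \<omega> (Suc t) =
     (let h = history A \<omega> t; a = A t h (seed_of \<omega>)
      in h @ [(a, reward \<omega> a (length (filter (\<lambda>p. fst p = a) h)))])"

definition recommend :: "alg \<Rightarrow> omega \<Rightarrow> nat \<Rightarrow> nat" where
  "recommend A \<omega> t = A t (history A \<omega> t) (seed_of \<omega>)"

definition num_samples :: "alg \<Rightarrow> omega \<Rightarrow> nat \<Rightarrow> nat \<Rightarrow> nat" where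
  "num_samples A \<omega> t i = length (filter (\<lambda>p. fst p = i) (history A \<omega> t))"

definition best_arm :: "nat \<Rightarrow> omega \<Rightarrow> nat" where
  "best_arm K \<omega> = (LEAST i. i < K \<and> (\<forall>j<K. mean \<omega> j \<le> mean \<omega> i))"

definition cond_exp_event :: "'a measure \<Rightarrow> ('a \<Rightarrow> real) \<Rightarrow> 'a set \<Rightarrow> real" where
  "cond_exp_event M X B = (\<integral>\<omega>. indicator B \<omega> * X \<omega> \<partial>M) / measure M B"

definition valid_alg :: "nat \<Rightarrow> seed measure \<Rightarrow> alg \<Rightarrow> bool" where
  "valid_alg K S A \<longleftrightarrow> (\<forall>t h s. A t h s < K) \<and>
     (\<forall>t h. A t h \<in> measurable S (count_space UNIV))"

definition BIC :: "nat \<Rightarrow> (nat \<Rightarrow> real measure) \<Rightarrow> seed measure \<Rightarrow> alg \<Rightarrow> bool" where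
  "BIC K P S A \<longleftrightarrow>
    (\<forall>t i j. i < K \<longrightarrow> j < K \<longrightarrow>
       measure (world K P S) {\<omega> \<in> space (world K P S). recommend A \<omega> t = i} > 0 \<longrightarrow>
       cond_exp_event (world K P S) (\<lambda>\<omega>. mean \<omega> i - mean \<omega> j)
          {\<omega> \<in> space (world K P S). recommend A \<omega> t = i} \<ge> 0)"

text \<open>From round T0 on, A is Thompson sampling: Pr[A_t = i | F_t] = Pr[A* = i | F_t],
  where F_t is generated by the (finitely-valued) history before round t.\<close>
definition thompson_from :: "nat \<Rightarrow> (nat \<Rightarrow> real measure) \<Rightarrow> seed measure \<Rightarrow> nat \<Rightarrow> alg \<Rightarrow> bool" where
  "thompson_from K P S T0 A \<longleftrightarrow>
    (\<forall>t \<ge> T0. \<forall>h. measure (world K P S) {\<omega> \<in> space (world K P S). history A \<omega> t = h} > 0 \<longrightarrow>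
       (\<forall>i<K. measure (world K P S) {\<omega> \<in> space (world K P S). history A \<omega> t = h \<and> recommend A \<omega> t = i}
            = measure (world K P S) {\<omega> \<in> space (world K P S). history A \<omega> t = h \<and> best_arm K \<omega> = i}))"

definition eps_TS :: "nat \<Rightarrow> (nat \<Rightarrow> real measure) \<Rightarrow> seed measure \<Rightarrow> real" where
  "eps_TS K P S = Min {(\<integral>\<omega>. max (mean \<omega> i - mean \<omega> j) 0 \<partial>world K P S) | i j. i < K \<and> j < K \<and> i \<noteq> j}"

definition delta_TS :: "nat \<Rightarrow> (nat \<Rightarrow> real measure) \<Rightarrow> seed measure \<Rightarrow> real" where
  "delta_TS K P S = Min {measure (world K P S) {\<omega> \<in> space (world K P S). best_arm K \<omega> = i} | i. i < K}"

definition valid_priors :: "nat \<Rightarrow> (nat \<Rightarrow> real measure) \<Rightarrow> bool" where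
  "valid_priors K P \<longleftrightarrow> (\<forall>i<K. prob_space (P i) \<and> sets (P i) = sets borel \<and> emeasure (P i) {0..1} = 1)"

end

theory Submission
  imports Defs
begin

(*
  Fix a round t >= T0 and arms i, j, and let Y be the gap mu_i - mu_j. A world splits into the
  algorithm's seed and an independent environment (the means and the reward samples), and the
  event that round t sees the history h is a product of a seed event and an environment event.
  Thompson sampling recommends i on h with the posterior probability of {A* = i}, so
    E[Y; A_t = i] = sum_h P(A* = i | h) E[Y; h].
  Once arms i and j have N samples each, the empirical gap of their first N samples is a
  function of h, so Y is nearly constant on h up to the excess (|Y - empirical gap| - eta)_+,
  and the sum is at least E[Y; A* = i] - 2 eta P(A* = i) - E[excess]. Because the priors are
  independent, a Harris-type inequality gives E[Y; A* = i] >= E[Y_+] P(A* = i) >= eps delta,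
  while Hoeffding's lemma makes E[excess] at most exp(-N eta^2) / (N eta). For eta = eps/4 and
  N >= 64 eps^-2 log(1/delta) the bound is nonnegative; before T0 the algorithm is the BIC ALG.
*)

section \<open>Worlds as an environment and a seed\<close>

type_synonym env = "(nat \<Rightarrow> real) \<times> ((nat \<times> nat) \<Rightarrow> real)"

definition prior_measure :: "nat \<Rightarrow> (nat \<Rightarrow> real measure) \<Rightarrow> (nat \<Rightarrow> real) measure" where
  "prior_measure K P = PiM {..<K} P"

definition sample_measure :: "nat \<Rightarrow> ((nat \<times> nat) \<Rightarrow> real) measure" where
  "sample_measure K = PiM ({..<K} \<times> UNIV) (\<lambda>_. uniform_measure lborel {0..1::real})"

definition env_measure :: "nat \<Rightarrow> (nat \<Rightarrow> real measure) \<Rightarrow> env measure" where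
  "env_measure K P = prior_measure K P \<Otimes>\<^sub>M sample_measure K"

definition env :: "omega \<Rightarrow> env" where
  "env \<omega> = (fst \<omega>, fst (snd \<omega>))"

lemma world_eq_pair: "world K P S = prior_measure K P \<Otimes>\<^sub>M (sample_measure K \<Otimes>\<^sub>M S)"
  by (simp add: world_def prior_measure_def sample_measure_def)

lemma prob_space_uniform_01: "prob_space (uniform_measure lborel {0..1::real})"
  by (rule prob_space_uniform_measure) auto

lemma prob_space_sample_measure: "prob_space (sample_measure K)"
  unfolding sample_measure_def by (intro prob_space_PiM prob_space_uniform_01)

lemma prob_space_prior_measure: "valid_priors K P \<Longrightarrow> prob_space (prior_measure K P)"
  unfolding prior_measure_def valid_priors_def by (rule prob_space_PiM) auto

lemma prob_space_env_measure: "valid_priors K P \<Longrightarrow> prob_space (env_measure K P)"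
  unfolding env_measure_def by (intro prob_space_pair prob_space_prior_measure prob_space_sample_measure)

lemma prob_space_world: "valid_priors K P \<Longrightarrow> prob_space S \<Longrightarrow> prob_space (world K P S)"
  unfolding world_eq_pair by (intro prob_space_pair prob_space_prior_measure prob_space_sample_measure)

lemma measurable_env [measurable]: "env \<in> measurable (world K P S) (env_measure K P)"
  unfolding env_def world_eq_pair env_measure_def by measurable

lemma measurable_seed_of [measurable]: "seed_of \<in> measurable (world K P S) S"
  unfolding seed_of_def world_eq_pair by measurable

lemma space_world_D:
  "\<omega> \<in> space (world K P S) \<Longrightarrow> env \<omega> \<in> space (env_measure K P) \<and> seed_of \<omega> \<in> space S"
  by (auto simp: world_eq_pair env_measure_def space_pair_measure env_def seed_of_def)

lemma measurable_component_borel: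
  assumes "k \<in> J" "sets (M k) = sets borel"
  shows "(\<lambda>a. a k) \<in> borel_measurable (PiM J M)"
  using measurable_component_singleton[OF assms(1), of M] assms(2) by (simp cong: measurable_cong_sets)

lemma measurable_env_mean:
  assumes "valid_priors K P" "a < K"
  shows "(\<lambda>x. fst x a) \<in> borel_measurable (env_measure K P)"
proof -
  have "(\<lambda>m. m a) \<in> borel_measurable (prior_measure K P)"
    unfolding prior_measure_def using assms by (intro measurable_component_borel) (auto simp: valid_priors_def)
  then show ?thesis unfolding env_measure_def by measurable
qed

lemma measurable_env_sample:
  assumes "a < K"
  shows "(\<lambda>x. snd x (a, n)) \<in> borel_measurable (env_measure K P)"
proof -
  have "(\<lambda>u. u (a, n)) \<in> measurable (sample_measure K) (uniform_measure lborel {0..1::real})"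
    unfolding sample_measure_def using assms by (intro measurable_component_singleton) auto
  then have "(\<lambda>u. u (a, n)) \<in> borel_measurable (sample_measure K)"
    by (simp cong: measurable_cong_sets)
  then show ?thesis unfolding env_measure_def by measurable
qed

lemma integral_pair_pair_indicator:
  fixes g :: "'a \<times> 'b \<Rightarrow> real"
  assumes M: "prob_space M" and N: "prob_space N" and S: "prob_space S" and A[measurable]: "A \<in> sets S"
    and g[measurable]: "g \<in> borel_measurable (M \<Otimes>\<^sub>M N)"
    and bound: "\<And>x. x \<in> space (M \<Otimes>\<^sub>M N) \<Longrightarrow> \<bar>g x\<bar> \<le> c"
  shows "(\<integral>\<omega>. g (fst \<omega>, fst (snd \<omega>)) * indicator A (snd (snd \<omega>)) \<partial>(M \<Otimes>\<^sub>M (N \<Otimes>\<^sub>M S)))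
       = measure S A * (\<integral>x. g x \<partial>(M \<Otimes>\<^sub>M N))"
proof -
  interpret M: prob_space M by (rule M)
  interpret N: prob_space N by (rule N)
  interpret S: prob_space S by (rule S)
  interpret NS: pair_prob_space N S ..
  interpret MNS: pair_prob_space M "N \<Otimes>\<^sub>M S" ..
  interpret MN: pair_prob_space M N ..
  have c: "0 \<le> c"
  proof -
    obtain a b where "a \<in> space M" "b \<in> space N" using M.not_empty N.not_empty by blast
    then show ?thesis using bound[of "(a, b)"] by (auto simp: space_pair_measure)
  qed
  have gAc: "\<bar>g (a, b) * indicator A s\<bar> \<le> c" if "a \<in> space M" "b \<in> space N" for a b s
    using bound[of "(a, b)"] that c by (auto simp: space_pair_measure indicator_def)
  have "integrable (M \<Otimes>\<^sub>M (N \<Otimes>\<^sub>M S)) (\<lambda>\<omega>. g (fst \<omega>, fst (snd \<omega>)) * indicator A (snd (snd \<omega>)))"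
    by (rule MNS.integrable_const_bound[where B=c]) (use gAc in \<open>auto simp: space_pair_measure\<close>)
  from MNS.integral_fst'[OF this, symmetric]
  have "(\<integral>\<omega>. g (fst \<omega>, fst (snd \<omega>)) * indicator A (snd (snd \<omega>)) \<partial>(M \<Otimes>\<^sub>M (N \<Otimes>\<^sub>M S)))
      = (\<integral>a. (\<integral>y. g (a, fst y) * indicator A (snd y) \<partial>(N \<Otimes>\<^sub>M S)) \<partial>M)"
    by simp
  also have "\<dots> = (\<integral>a. measure S A * (\<integral>b. g (a, b) \<partial>N) \<partial>M)"
  proof (rule Bochner_Integration.integral_cong[OF refl])
    fix a assume a: "a \<in> space M"
    have "integrable (N \<Otimes>\<^sub>M S) (\<lambda>y. g (a, fst y) * indicator A (snd y))"
      using a by (intro NS.integrable_const_bound[where B=c]) (use gAc in \<open>auto simp: space_pair_measure\<close>)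
    from NS.integral_fst'[OF this, symmetric]
    have "(\<integral>y. g (a, fst y) * indicator A (snd y) \<partial>(N \<Otimes>\<^sub>M S))
        = (\<integral>b. (\<integral>s. g (a, b) * indicator A s \<partial>S) \<partial>N)"
      by simp
    then show "(\<integral>y. g (a, fst y) * indicator A (snd y) \<partial>(N \<Otimes>\<^sub>M S)) = measure S A * (\<integral>b. g (a, b) \<partial>N)"
      by (simp add: mult.commute)
  qed
  also have "\<dots> = measure S A * (\<integral>x. g x \<partial>(M \<Otimes>\<^sub>M N))"
    using bound by (simp add: MN.integral_fst' MN.integrable_const_bound[where B=c])
  finally show ?thesis .
qed

lemma integral_world_env_seed:
  fixes f :: "env \<Rightarrow> real"
  assumes vp: "valid_priors K P" and S: "prob_space S" and A: "A \<in> sets S"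
    and f: "f \<in> borel_measurable (env_measure K P)"
    and bound: "\<And>x. x \<in> space (env_measure K P) \<Longrightarrow> \<bar>f x\<bar> \<le> c"
  shows "(\<integral>\<omega>. f (env \<omega>) * indicator A (seed_of \<omega>) \<partial>world K P S) = measure S A * (\<integral>x. f x \<partial>env_measure K P)"
  using integral_pair_pair_indicator[OF prob_space_prior_measure[OF vp] prob_space_sample_measure S A, where g=f and c=c]
    f bound
  by (simp add: world_eq_pair env_measure_def env_def seed_of_def)

lemma integral_world_env:
  fixes f :: "env \<Rightarrow> real"
  assumes vp: "valid_priors K P" and S: "prob_space S"
    and f: "f \<in> borel_measurable (env_measure K P)"
    and bound: "\<And>x. x \<in> space (env_measure K P) \<Longrightarrow> \<bar>f x\<bar> \<le> c"
  shows "(\<integral>\<omega>. f (env \<omega>) \<partial>world K P S) = (\<integral>x. f x \<partial>env_measure K P)"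
proof -
  have "(\<integral>\<omega>. f (env \<omega>) \<partial>world K P S) = (\<integral>\<omega>. f (env \<omega>) * indicator (space S) (seed_of \<omega>) \<partial>world K P S)"
    by (intro Bochner_Integration.integral_cong) (auto dest: space_world_D)
  then show ?thesis
    using integral_world_env_seed[OF vp S sets.top f bound] prob_space.prob_space[OF S] by simp
qed

lemma measure_world_seed_env:
  assumes vp: "valid_priors K P" and S: "prob_space S" and A: "A \<in> sets S"
    and B: "B \<in> sets (env_measure K P)"
  shows "measure (world K P S) {\<omega> \<in> space (world K P S). seed_of \<omega> \<in> A \<and> env \<omega> \<in> B}
       = measure S A * measure (env_measure K P) B"
proof -
  interpret W: prob_space "world K P S" using prob_space_world[OF vp S] .
  have "{\<omega> \<in> space (world K P S). seed_of \<omega> \<in> A \<and> env \<omega> \<in> B} \<in> sets (world K P S)"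
    using A B by measurable
  then have "measure (world K P S) {\<omega> \<in> space (world K P S). seed_of \<omega> \<in> A \<and> env \<omega> \<in> B}
      = (\<integral>\<omega>. indicator {\<omega> \<in> space (world K P S). seed_of \<omega> \<in> A \<and> env \<omega> \<in> B} \<omega> \<partial>world K P S)"
    by simp
  also have "\<dots> = (\<integral>\<omega>. indicator B (env \<omega>) * indicator A (seed_of \<omega>) \<partial>world K P S)"
    by (intro Bochner_Integration.integral_cong) (auto simp: indicator_def)
  also have "\<dots> = measure S A * measure (env_measure K P) B"
    using integral_world_env_seed[OF vp S A, where f="indicator B" and c=1] B by simp
  finally show ?thesis .
qed

section \<open>Histories\<close>

definition arm_count :: "nat \<Rightarrow> hist \<Rightarrow> nat" where
  "arm_count a h = length (filter (\<lambda>p. fst p = a) h)"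

definition consistent_seed :: "alg \<Rightarrow> hist \<Rightarrow> seed \<Rightarrow> bool" where
  "consistent_seed A h s \<longleftrightarrow> (\<forall>k<length h. A k (take k h) s = fst (h ! k))"

definition consistent_env :: "hist \<Rightarrow> env \<Rightarrow> bool" where
  "consistent_env h x \<longleftrightarrow>
     (\<forall>k<length h. (snd x (fst (h ! k), arm_count (fst (h ! k)) (take k h)) < fst x (fst (h ! k))) = snd (h ! k))"

definition histories :: "nat \<Rightarrow> nat \<Rightarrow> hist set" where
  "histories K t = {h. set h \<subseteq> {..<K} \<times> UNIV \<and> length h = t}"

lemma arm_count_snoc: "arm_count a (h @ [p]) = arm_count a h + (if fst p = a then 1 else 0)"
  by (simp add: arm_count_def)

lemma consistent_seed_snoc:
  "consistent_seed A (h @ [p]) s \<longleftrightarrow> consistent_seed A h s \<and> A (length h) h s = fst p"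
  by (auto simp: consistent_seed_def nth_append less_Suc_eq)

lemma consistent_env_snoc:
  "consistent_env (h @ [p]) x \<longleftrightarrow>
     consistent_env h x \<and> (snd x (fst p, arm_count (fst p) h) < fst x (fst p)) = snd p"
  by (auto simp: consistent_env_def nth_append less_Suc_eq)

lemma history_eq_iff:
  "history A \<omega> t = h \<longleftrightarrow> length h = t \<and> consistent_seed A h (seed_of \<omega>) \<and> consistent_env h (env \<omega>)"
proof (induction t arbitrary: h)
  case 0
  show ?case by (auto simp: consistent_seed_def consistent_env_def)
next
  case (Suc t)
  show ?case
  proof (cases h rule: rev_cases)
    case Nil
    then show ?thesis by (simp add: Let_def)
  next
    case (snoc h' p)
    then show ?thesis
      using Suc.IH[of h']
      by (cases p) (auto simp: Let_def consistent_seed_snoc consistent_env_snoc reward_def env_def arm_count_def)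
  qed
qed

lemma num_samples_mono:
  assumes "t \<le> t'"
  shows "num_samples A \<omega> t i \<le> num_samples A \<omega> t' i"
  by (rule lift_Suc_mono_le[of "\<lambda>t. num_samples A \<omega> t i", OF _ assms]) (simp add: num_samples_def Let_def)

lemma history_eq_if_agree:
  assumes "\<forall>t'<t. A t' = B t'"
  shows "history A \<omega> t = history B \<omega> t"
  using assms by (induction t) (simp_all add: Let_def)

lemma consistent_env_sample_eq:
  assumes "consistent_env h x" "consistent_env h y" "k < arm_count a h"
  shows "(snd x (a, k) < fst x a) = (snd y (a, k) < fst y a)"
  using assms
proof (induction h rule: rev_induct)
  case Nil
  then show ?case by (simp add: arm_count_def)
next
  case (snoc p h)
  then show ?case
    by (cases "k < arm_count a h") (auto simp: consistent_env_snoc arm_count_snoc less_Suc_eq split: if_splits)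
qed

lemma finite_histories: "finite (histories K t)"
  unfolding histories_def by (rule finite_lists_length_eq) simp

lemma history_in_histories: "valid_alg K S A \<Longrightarrow> history A \<omega> t \<in> histories K t"
  by (induction t) (auto simp: histories_def Let_def valid_alg_def)

definition consistent_seeds :: "seed measure \<Rightarrow> alg \<Rightarrow> hist \<Rightarrow> nat set \<Rightarrow> seed set" where
  "consistent_seeds S A h I = {s \<in> space S. consistent_seed A h s \<and> A (length h) h s \<in> I}"

definition consistent_envs :: "nat \<Rightarrow> (nat \<Rightarrow> real measure) \<Rightarrow> hist \<Rightarrow> env set" where
  "consistent_envs K P h = {x \<in> space (env_measure K P). consistent_env h x}"

lemma sets_consistent_seeds:
  assumes "valid_alg K S A"
  shows "consistent_seeds S A h I \<in> sets S"
proof -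
  have pred: "Measurable.pred S (\<lambda>s. A k h' s \<in> J)" for k h' J
  proof -
    have "A k h' \<in> measurable S (count_space UNIV)"
      using assms by (simp add: valid_alg_def)
    from measurable_sets[OF this, of J] have "A k h' -` J \<inter> space S \<in> sets S" by simp
    moreover have "A k h' -` J \<inter> space S = {s \<in> space S. A k h' s \<in> J}" by auto
    ultimately show ?thesis by (simp add: pred_def)
  qed
  have "Measurable.pred S (\<lambda>s. A k h' s = a)" for k h' a
    using pred[of k h' "{a}"] by simp
  then have "Measurable.pred S (\<lambda>s. \<forall>k\<in>{..<length h}. A k (take k h) s = fst (h ! k))"
    by (intro pred_intros_countable_bounded(3))
  then have "Measurable.pred S (consistent_seed A h)"
    unfolding consistent_seed_def by (simp only: Ball_def lessThan_iff)
  then have "Measurable.pred S (\<lambda>s. consistent_seed A h s \<and> A (length h) h s \<in> I)"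
    using pred by (rule pred_intros_logic(3))
  then show ?thesis
    by (simp add: consistent_seeds_def pred_def)
qed

lemma sets_consistent_envs:
  assumes vp: "valid_priors K P" and h: "set h \<subseteq> {..<K} \<times> UNIV"
  shows "consistent_envs K P h \<in> sets (env_measure K P)"
proof -
  have "Measurable.pred (env_measure K P)
      (\<lambda>x. (snd x (fst (h ! k), arm_count (fst (h ! k)) (take k h)) < fst x (fst (h ! k))) = snd (h ! k))"
    if "k < length h" for k
  proof -
    have "fst (h ! k) < K" using h nth_mem[OF that] by auto
    note [measurable] = measurable_env_mean[OF vp this] measurable_env_sample[OF this]
    show ?thesis by measurable
  qed
  then have "Measurable.pred (env_measure K P) (\<lambda>x. \<forall>k\<in>{..<length h}.
      (snd x (fst (h ! k), arm_count (fst (h ! k)) (take k h)) < fst x (fst (h ! k))) = snd (h ! k))"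
    by (intro pred_intros_countable_bounded(3)) auto
  then have "Measurable.pred (env_measure K P) (consistent_env h)"
    unfolding consistent_env_def by (simp only: Ball_def lessThan_iff)
  then show ?thesis by (simp add: consistent_envs_def pred_def)
qed

lemma history_event_eq:
  assumes "length h = t"
  shows "{\<omega> \<in> space (world K P S). history A \<omega> t = h \<and> recommend A \<omega> t \<in> I \<and> env \<omega> \<in> B}
       = {\<omega> \<in> space (world K P S). seed_of \<omega> \<in> consistent_seeds S A h I \<and> env \<omega> \<in> consistent_envs K P h \<inter> B}"
proof (rule Collect_cong, rule conj_cong[OF refl])
  fix \<omega> assume \<omega>: "\<omega> \<in> space (world K P S)"
  have "history A \<omega> t = h \<longleftrightarrow> consistent_seed A h (seed_of \<omega>) \<and> consistent_env h (env \<omega>)"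
    using history_eq_iff assms by blast
  then show "(history A \<omega> t = h \<and> recommend A \<omega> t \<in> I \<and> env \<omega> \<in> B)
      = (seed_of \<omega> \<in> consistent_seeds S A h I \<and> env \<omega> \<in> consistent_envs K P h \<inter> B)"
    using space_world_D[OF \<omega>] assms
    by (auto simp: recommend_def consistent_seeds_def consistent_envs_def)
qed

lemma measure_history_event:
  assumes vp: "valid_priors K P" and S: "prob_space S" and va: "valid_alg K S A"
    and h: "h \<in> histories K t" and B: "B \<in> sets (env_measure K P)"
  shows "measure (world K P S) {\<omega> \<in> space (world K P S). history A \<omega> t = h \<and> recommend A \<omega> t \<in> I \<and> env \<omega> \<in> B}
       = measure S (consistent_seeds S A h I) * measure (env_measure K P) (consistent_envs K P h \<inter> B)"
proof -
  have "set h \<subseteq> {..<K} \<times> UNIV" "length h = t" using h by (auto simp: histories_def)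
  then show ?thesis
    unfolding history_event_eq[OF \<open>length h = t\<close>]
    using B by (intro measure_world_seed_env[OF vp S] sets_consistent_seeds[OF va] sets.Int sets_consistent_envs[OF vp])
qed

lemma sets_history_event:
  assumes vp: "valid_priors K P" and va: "valid_alg K S A"
    and h: "h \<in> histories K t" and B: "B \<in> sets (env_measure K P)"
  shows "{\<omega> \<in> space (world K P S). history A \<omega> t = h \<and> recommend A \<omega> t \<in> I \<and> env \<omega> \<in> B} \<in> sets (world K P S)"
proof -
  have [measurable]: "consistent_seeds S A h I \<in> sets S" "consistent_envs K P h \<in> sets (env_measure K P)"
    using h sets_consistent_seeds[OF va] sets_consistent_envs[OF vp] by (auto simp: histories_def)
  show ?thesis
    using h B by (simp add: history_event_eq histories_def)
qed

lemma history_event_env_space: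
  "{\<omega> \<in> space (world K P S). history A \<omega> t = h \<and> recommend A \<omega> t \<in> I}
   = {\<omega> \<in> space (world K P S). history A \<omega> t = h \<and> recommend A \<omega> t \<in> I \<and> env \<omega> \<in> space (env_measure K P)}"
  by (auto dest: space_world_D)

lemma integral_history_event:
  fixes f :: "env \<Rightarrow> real"
  assumes vp: "valid_priors K P" and S: "prob_space S" and va: "valid_alg K S A" and h: "h \<in> histories K t"
    and f[measurable]: "f \<in> borel_measurable (env_measure K P)"
    and bound: "\<And>x. x \<in> space (env_measure K P) \<Longrightarrow> \<bar>f x\<bar> \<le> c"
  shows "(\<integral>\<omega>. indicator {\<omega> \<in> space (world K P S). history A \<omega> t = h \<and> recommend A \<omega> t \<in> I} \<omega> * f (env \<omega>) \<partial>world K P S)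
       = measure S (consistent_seeds S A h I) * (\<integral>x. indicator (consistent_envs K P h) x * f x \<partial>env_measure K P)"
proof -
  have "length h = t" and [measurable]: "consistent_envs K P h \<in> sets (env_measure K P)"
    using h sets_consistent_envs[OF vp] by (auto simp: histories_def)
  then have "{\<omega> \<in> space (world K P S). history A \<omega> t = h \<and> recommend A \<omega> t \<in> I}
      = {\<omega> \<in> space (world K P S). seed_of \<omega> \<in> consistent_seeds S A h I \<and> env \<omega> \<in> consistent_envs K P h}"
    unfolding history_event_env_space history_event_eq[OF \<open>length h = t\<close>] by (auto simp: consistent_envs_def)
  then have "(\<integral>\<omega>. indicator {\<omega> \<in> space (world K P S). history A \<omega> t = h \<and> recommend A \<omega> t \<in> I} \<omega> * f (env \<omega>) \<partial>world K P S)
      = (\<integral>\<omega>. (indicator (consistent_envs K P h) (env \<omega>) * f (env \<omega>)) * indicator (consistent_seeds S A h I) (seed_of \<omega>) \<partial>world K P S)"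
    by (intro Bochner_Integration.integral_cong) (auto simp: indicator_def)
  also have "\<dots> = measure S (consistent_seeds S A h I) * (\<integral>x. indicator (consistent_envs K P h) x * f x \<partial>env_measure K P)"
  proof (rule integral_world_env_seed[OF vp S sets_consistent_seeds[OF va], where c="\<bar>c\<bar>"])
    show "\<bar>indicator (consistent_envs K P h) x * f x\<bar> \<le> \<bar>c\<bar>" if "x \<in> space (env_measure K P)" for x
      using bound[OF that] by (auto simp: indicator_def)
  qed measurable
  finally show ?thesis .
qed

lemma integral_recommend_eq_sum:
  fixes f :: "env \<Rightarrow> real"
  assumes vp: "valid_priors K P" and S: "prob_space S" and va: "valid_alg K S A"
    and f[measurable]: "f \<in> borel_measurable (env_measure K P)"
    and bound: "\<And>x. x \<in> space (env_measure K P) \<Longrightarrow> \<bar>f x\<bar> \<le> c"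
  shows "(\<integral>\<omega>. indicator {\<omega> \<in> space (world K P S). recommend A \<omega> t \<in> I} \<omega> * f (env \<omega>) \<partial>world K P S)
       = (\<Sum>h\<in>histories K t. measure S (consistent_seeds S A h I)
            * (\<integral>x. indicator (consistent_envs K P h) x * f x \<partial>env_measure K P))"
proof -
  interpret W: prob_space "world K P S" using prob_space_world[OF vp S] .
  define E where "E h = {\<omega> \<in> space (world K P S). history A \<omega> t = h \<and> recommend A \<omega> t \<in> I}" for h
  have "indicator {\<omega> \<in> space (world K P S). recommend A \<omega> t \<in> I} \<omega> * f (env \<omega>)
      = (\<Sum>h\<in>histories K t. indicator (E h) \<omega> * f (env \<omega>))" for \<omega>
  proof -
    have "(\<Sum>h\<in>histories K t. indicator (E h) \<omega> * f (env \<omega>))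
        = (\<Sum>h\<in>histories K t. if h = history A \<omega> t then indicator {\<omega> \<in> space (world K P S). recommend A \<omega> t \<in> I} \<omega> * f (env \<omega>) else 0)"
      by (intro sum.cong) (auto simp: E_def indicator_def)
    also have "\<dots> = indicator {\<omega> \<in> space (world K P S). recommend A \<omega> t \<in> I} \<omega> * f (env \<omega>)"
      by (simp only: sum.delta[OF finite_histories] history_in_histories[OF va] if_True)
    finally show ?thesis ..
  qed
  then have "(\<integral>\<omega>. indicator {\<omega> \<in> space (world K P S). recommend A \<omega> t \<in> I} \<omega> * f (env \<omega>) \<partial>world K P S)
      = (\<integral>\<omega>. (\<Sum>h\<in>histories K t. indicator (E h) \<omega> * f (env \<omega>)) \<partial>world K P S)"
    by simp
  also have "\<dots> = (\<Sum>h\<in>histories K t. (\<integral>\<omega>. indicator (E h) \<omega> * f (env \<omega>) \<partial>world K P S))"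
  proof (rule Bochner_Integration.integral_sum)
    fix h assume "h \<in> histories K t"
    from sets_history_event[OF vp va this sets.top]
    have [measurable]: "E h \<in> sets (world K P S)" by (simp add: E_def history_event_env_space)
    have "\<bar>indicator (E h) \<omega> * f (env \<omega>)\<bar> \<le> \<bar>c\<bar>" if "\<omega> \<in> space (world K P S)" for \<omega>
      using bound[of "env \<omega>"] space_world_D[OF that] by (auto simp: indicator_def)
    then show "integrable (world K P S) (\<lambda>\<omega>. indicator (E h) \<omega> * f (env \<omega>))"
      by (intro W.integrable_const_bound[where B="\<bar>c\<bar>"] AE_I2) auto
  qed
  also have "\<dots> = (\<Sum>h\<in>histories K t. measure S (consistent_seeds S A h I)
            * (\<integral>x. indicator (consistent_envs K P h) x * f x \<partial>env_measure K P))"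
    unfolding E_def using integral_history_event[OF vp S va _ f bound] by simp
  finally show ?thesis .
qed

section \<open>Thompson sampling when the history nearly determines the gap\<close>

definition clip01 :: "real \<Rightarrow> real" where
  "clip01 y = max 0 (min 1 y)"

text \<open>Clipping makes the gap bounded everywhere; almost surely it is \<open>\<mu>\<^sub>i - \<mu>\<^sub>j\<close> (\<open>gap_eq_mean_diff_AE\<close>).\<close>
definition gap :: "nat \<Rightarrow> nat \<Rightarrow> (nat \<Rightarrow> real) \<Rightarrow> real" where
  "gap i j m = clip01 (m i) - clip01 (m j)"

definition empirical_gap :: "nat \<Rightarrow> nat \<Rightarrow> nat \<Rightarrow> env \<Rightarrow> real" where
  "empirical_gap N i j x = (\<Sum>k<N. of_bool (snd x (i, k) < fst x i) - of_bool (snd x (j, k) < fst x j)) / real N"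

definition deviation :: "nat \<Rightarrow> nat \<Rightarrow> nat \<Rightarrow> env \<Rightarrow> real" where
  "deviation N i j x = gap i j (fst x) - empirical_gap N i j x"

definition best_index :: "nat \<Rightarrow> (nat \<Rightarrow> real) \<Rightarrow> nat" where
  "best_index K m = (LEAST i. i < K \<and> (\<forall>j<K. m j \<le> m i))"

definition best_envs :: "nat \<Rightarrow> (nat \<Rightarrow> real measure) \<Rightarrow> nat \<Rightarrow> env set" where
  "best_envs K P i = {x \<in> space (env_measure K P). best_index K (fst x) = i}"

lemma clip01_bounds: "0 \<le> clip01 y" "clip01 y \<le> 1"
  by (auto simp: clip01_def)

lemma clip01_id: "y \<in> {0..1} \<Longrightarrow> clip01 y = y"
  by (auto simp: clip01_def)

lemma clip01_mono: "x \<le> y \<Longrightarrow> clip01 x \<le> clip01 y"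
  by (auto simp: clip01_def)

lemma abs_gap_le: "\<bar>gap i j m\<bar> \<le> 1"
  using clip01_bounds[of "m i"] clip01_bounds[of "m j"] by (auto simp: gap_def)

lemma abs_empirical_gap_le: "\<bar>empirical_gap N i j x\<bar> \<le> 1"
proof -
  have "\<bar>\<Sum>k<N. of_bool (snd x (i, k) < fst x i) - of_bool (snd x (j, k) < fst x j)\<bar> \<le> (\<Sum>k<N. (1::real))"
    by (rule order_trans[OF sum_abs sum_mono]) simp
  then show ?thesis
    by (cases "N = 0") (simp_all add: empirical_gap_def abs_divide divide_le_eq)
qed

lemma abs_deviation_le: "\<bar>deviation N i j x\<bar> \<le> 2"
  using abs_gap_le[of i j "fst x"] abs_empirical_gap_le[of N i j x] by (simp add: deviation_def)

lemma best_arm_eq: "best_arm K \<omega> = best_index K (fst (env \<omega>))"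
  by (simp add: best_arm_def best_index_def mean_def env_def)

lemma best_index_eq_iff:
  fixes m :: "nat \<Rightarrow> real"
  assumes "i < K"
  shows "best_index K m = i \<longleftrightarrow> (\<forall>j<K. m j \<le> m i) \<and> (\<forall>j<i. m j < m i)"
proof
  assume best: "best_index K m = i"
  have "Max (m ` {..<K}) \<in> m ` {..<K}"
    using assms by (intro Max_in) auto
  then obtain i0 where "i0 < K" "m i0 = Max (m ` {..<K})"
    by (metis imageE lessThan_iff)
  then have "\<exists>l. l < K \<and> (\<forall>j<K. m j \<le> m l)"
    by (intro exI[of _ i0]) auto
  from LeastI_ex[OF this] have max: "i < K \<and> (\<forall>j<K. m j \<le> m i)"
    using best by (simp add: best_index_def)
  have "m j < m i" if "j < i" for j
  proof (rule ccontr)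
    assume "\<not> m j < m i"
    then have "j < K \<and> (\<forall>l<K. m l \<le> m j)" using max that by force
    then have "i \<le> j" using Least_le[of "\<lambda>i. i < K \<and> (\<forall>j<K. m j \<le> m i)" j] best
      by (simp add: best_index_def)
    then show False using that by simp
  qed
  then show "(\<forall>j<K. m j \<le> m i) \<and> (\<forall>j<i. m j < m i)" using max by blast
next
  assume max: "(\<forall>j<K. m j \<le> m i) \<and> (\<forall>j<i. m j < m i)"
  show "best_index K m = i"
    unfolding best_index_def
  proof (rule Least_equality)
    show "i < K \<and> (\<forall>j<K. m j \<le> m i)" using max assms by blast
    show "i \<le> l" if l: "l < K \<and> (\<forall>j<K. m j \<le> m l)" for l
    proof (rule ccontr)
      assume "\<not> i \<le> l"
      then have "m l < m i" using max by simp
      moreover have "m i \<le> m l" using l assms by blast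
      ultimately show False by simp
    qed
  qed
qed

lemma measurable_best_index:
  assumes borel: "\<And>k. k < K \<Longrightarrow> sets (M k) = sets borel" and i: "i < K"
  shows "Measurable.pred (PiM {..<K} M) (\<lambda>a. best_index K a = i)"
proof -
  have le: "Measurable.pred (PiM {..<K} M) (\<lambda>a. a k \<le> a i)"
    and less: "Measurable.pred (PiM {..<K} M) (\<lambda>a. a k < a i)" if "k < K" for k
    using measurable_component_borel[of k "{..<K}" M] measurable_component_borel[of i "{..<K}" M] borel that i
    unfolding pred_def by (auto intro: borel_measurable_le borel_measurable_less)
  have "Measurable.pred (PiM {..<K} M) (\<lambda>a. (\<forall>k\<in>{..<K}. a k \<le> a i) \<and> (\<forall>k\<in>{..<i}. a k < a i))"
    using i by (intro pred_intros_logic(3) pred_intros_countable_bounded(3) le less) auto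
  then show ?thesis
    using best_index_eq_iff[OF i] by (simp only: Ball_def lessThan_iff)
qed

lemma measurable_gap_env:
  assumes "valid_priors K P" "i < K" "j < K"
  shows "(\<lambda>x. gap i j (fst x)) \<in> borel_measurable (env_measure K P)"
  using measurable_env_mean[OF assms(1,2)] measurable_env_mean[OF assms(1,3)]
  unfolding gap_def clip01_def by measurable

lemma measurable_deviation:
  assumes "valid_priors K P" "i < K" "j < K"
  shows "deviation N i j \<in> borel_measurable (env_measure K P)"
proof -
  note [measurable] = measurable_gap_env[OF assms] measurable_env_mean[OF assms(1,2)]
    measurable_env_mean[OF assms(1,3)] measurable_env_sample[OF assms(2)] measurable_env_sample[OF assms(3)]
  show ?thesis unfolding deviation_def empirical_gap_def by measurable
qed

lemma sets_best_envs:
  assumes vp: "valid_priors K P" and i: "i < K"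
  shows "best_envs K P i \<in> sets (env_measure K P)"
proof -
  have "Measurable.pred (prior_measure K P) (\<lambda>m. best_index K m = i)"
    unfolding prior_measure_def using vp i by (intro measurable_best_index) (auto simp: valid_priors_def)
  then have "Measurable.pred (env_measure K P) (\<lambda>x. best_index K (fst x) = i)"
    unfolding env_measure_def by measurable
  then show ?thesis by (simp add: best_envs_def pred_def)
qed

lemma centered_indicator_mult_le:
  fixes p y y0 \<eta> T :: real
  assumes p: "0 \<le> p" "p \<le> 1" and near: "\<bar>y - y0\<bar> \<le> \<eta> + T" and T: "0 \<le> T"
  shows "(of_bool b - p) * y \<le> (of_bool b - p) * y0 + \<eta> * (of_bool b * (1 - p) + (1 - of_bool b) * p) + T"
proof -
  have "\<bar>q * (y - y0)\<bar> \<le> q * \<eta> + T" if "0 \<le> q" "q \<le> 1" for q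
  proof -
    have "\<bar>q * (y - y0)\<bar> \<le> q * (\<eta> + T)" using that near by (simp add: abs_mult mult_left_mono)
    also have "\<dots> \<le> q * \<eta> + T" using that T mult_left_le_one_le[of T q] by (simp add: algebra_simps)
    finally show ?thesis .
  qed
  from this[of "1 - p"] this[of p] p show ?thesis
    by (cases b) (auto simp: abs_le_iff algebra_simps)
qed

text \<open>If \<open>Y\<close> is nearly constant on \<open>B\<close>, it is nearly uncorrelated on \<open>B\<close> with any event \<open>G\<close>.\<close>
lemma (in finite_measure) cov_indicator_le_if_near_const:
  fixes Y T :: "'a \<Rightarrow> real"
  assumes B[measurable]: "B \<in> sets M" and G[measurable]: "G \<in> sets M" and pos: "0 < measure M B"
    and Y: "integrable M Y" and T: "integrable M T"
    and near: "\<And>x. x \<in> B \<Longrightarrow> \<bar>Y x - y0\<bar> \<le> \<eta> + T x" and T_nonneg: "\<And>x. 0 \<le> T x" and \<eta>: "0 \<le> \<eta>"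
  shows "(\<integral>x. indicator B x * (indicator G x * Y x) \<partial>M)
           - measure M (B \<inter> G) / measure M B * (\<integral>x. indicator B x * Y x \<partial>M)
         \<le> 2 * \<eta> * measure M (B \<inter> G) + (\<integral>x. indicator B x * T x \<partial>M)"
proof -
  define m g where "m = measure M B" and "g = measure M (B \<inter> G)"
  define p where "p = g / m"
  have "g \<le> m" unfolding g_def m_def by (intro finite_measure_mono) auto
  then have p: "0 \<le> p" "p \<le> 1" "p * m = g" using pos by (auto simp: p_def m_def g_def)
  have pointwise: "indicator B x * (indicator G x * Y x) - p * (indicator B x * Y x)
      \<le> (y0 + \<eta> * (1 - 2 * p)) * indicator (B \<inter> G) x + (\<eta> * p - p * y0) * indicator B x + indicator B x * T x"
    for x
  proof (cases "x \<in> B")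
    case True
    from centered_indicator_mult_le[OF p(1,2) near[OF True] T_nonneg, of "x \<in> G"] True show ?thesis
      by (cases "x \<in> G") (simp_all add: algebra_simps)
  qed simp
  have int: "integrable M (\<lambda>x. indicator A x * f x)" if "A \<in> sets M" "integrable M f" for A and f :: "'a \<Rightarrow> real"
    using integrable_mult_indicator[OF that] by simp
  have ind: "integrable M (indicator A :: 'a \<Rightarrow> real)" if "A \<in> sets M" for A
    using that by (intro integrable_real_indicator) (simp_all add: less_top[symmetric])
  have "(\<integral>x. indicator B x * (indicator G x * Y x) - p * (indicator B x * Y x) \<partial>M)
      \<le> (\<integral>x. (y0 + \<eta> * (1 - 2 * p)) * indicator (B \<inter> G) x + (\<eta> * p - p * y0) * indicator B x + indicator B x * T x \<partial>M)"
    using pointwise by (intro integral_mono Bochner_Integration.integrable_add Bochner_Integration.integrable_diff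
        integrable_mult_right int ind Y T sets.Int) auto
  also have "\<dots> = (y0 + \<eta> * (1 - 2 * p)) * g + (\<eta> * p - p * y0) * m + (\<integral>x. indicator B x * T x \<partial>M)"
    using T int ind by (simp add: g_def m_def)
  also have "\<dots> = 2 * \<eta> * g * (1 - p) + (\<integral>x. indicator B x * T x \<partial>M)"
    using p(3) by (simp add: algebra_simps)
  also have "\<dots> \<le> 2 * \<eta> * g + (\<integral>x. indicator B x * T x \<partial>M)"
    using p \<eta> by (simp add: g_def mult_left_le)
  finally show ?thesis
    using Y int by (simp add: p_def g_def m_def)
qed

lemma (in finite_measure) weighted_cov_indicator_le:
  fixes Y T :: "'a \<Rightarrow> real"
  assumes B[measurable]: "B \<in> sets M" and G[measurable]: "G \<in> sets M"
    and Y: "integrable M Y" and T: "integrable M T" and T_nonneg: "\<And>x. 0 \<le> T x" and \<eta>: "0 \<le> \<eta>"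
    and c: "0 \<le> c" "c \<le> d"
    and proportional: "0 < d * measure M B \<Longrightarrow> c * measure M B = d * measure M (B \<inter> G)"
    and near: "0 < d * measure M B \<Longrightarrow> \<exists>y0. \<forall>x\<in>B. \<bar>Y x - y0\<bar> \<le> \<eta> + T x"
  shows "d * ((\<integral>x. indicator B x * (indicator G x * Y x) \<partial>M) - 2 * \<eta> * measure M (B \<inter> G)
              - (\<integral>x. indicator B x * T x \<partial>M))
         \<le> c * (\<integral>x. indicator B x * Y x \<partial>M)"
proof (cases "0 < d * measure M B")
  case True
  then have pos: "0 < measure M B" and d: "0 < d"
    using c by (auto simp: zero_less_mult_iff)
  obtain y0 where "\<forall>x\<in>B. \<bar>Y x - y0\<bar> \<le> \<eta> + T x" using near[OF True] by blast
  then have le: "(\<integral>x. indicator B x * (indicator G x * Y x) \<partial>M) - 2 * \<eta> * measure M (B \<inter> G)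
        - (\<integral>x. indicator B x * T x \<partial>M)
      \<le> measure M (B \<inter> G) / measure M B * (\<integral>x. indicator B x * Y x \<partial>M)"
    using cov_indicator_le_if_near_const[OF B G pos Y T _ T_nonneg \<eta>] by fastforce
  have "c = d * (measure M (B \<inter> G) / measure M B)"
    using proportional[OF True] pos by (simp add: field_simps)
  then show ?thesis
    using mult_left_mono[OF le less_imp_le[OF d]] by (simp only: mult.assoc)
next
  case False
  then have "d = 0 \<or> measure M B = 0"
    using c measure_nonneg[of M B] by (simp add: not_less mult_le_0_iff) linarith
  then show ?thesis
  proof
    assume "d = 0"
    then show ?thesis using c by simp
  next
    assume "measure M B = 0"
    then have "AE x in M. x \<notin> B"
      using B by (intro AE_not_in) (simp add: null_sets_def emeasure_eq_measure)
    then have "(\<integral>x. indicator B x * f x \<partial>M) = 0" for f :: "'a \<Rightarrow> real"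
      by (intro integral_eq_zero_AE) (auto elim: eventually_mono)
    moreover have "measure M (B \<inter> G) = 0"
      using \<open>measure M B = 0\<close> finite_measure_mono[of "B \<inter> G" B] measure_nonneg[of M "B \<inter> G"] by simp
    ultimately show ?thesis by simp
  qed
qed

lemma ex_in_event_if_AE:
  assumes "AE x in M. P x" and "{x \<in> space M. Q x} \<in> sets M" and "0 < measure M {x \<in> space M. Q x}"
  shows "\<exists>x\<in>space M. Q x \<and> P x"
proof (rule ccontr)
  assume "\<not> (\<exists>x\<in>space M. Q x \<and> P x)"
  then have "AE x in M. P x \<longrightarrow> \<not> Q x"
    by (intro AE_I2) auto
  with assms(1) have "AE x in M. \<not> Q x"
    by eventually_elim auto
  then have "emeasure M {x \<in> space M. Q x} = 0"
    by (rule emeasure_eq_0_AE)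
  then show False using assms(3) by (simp add: measure_def)
qed

lemma empirical_gap_eq_if_consistent:
  assumes "consistent_env h x" "consistent_env h y" "N \<le> arm_count i h" "N \<le> arm_count j h"
  shows "empirical_gap N i j x = empirical_gap N i j y"
  unfolding empirical_gap_def
  using consistent_env_sample_eq[OF assms(1,2)] assms(3,4)
  by (intro arg_cong[where f="\<lambda>s. s / real N"] sum.cong refl) (auto intro: order.strict_trans2)

lemma integral_env_eq_sum:
  fixes f :: "env \<Rightarrow> real"
  assumes vp: "valid_priors K P" and S: "prob_space S" and va: "valid_alg K S A"
    and f[measurable]: "f \<in> borel_measurable (env_measure K P)"
    and bound: "\<And>x. x \<in> space (env_measure K P) \<Longrightarrow> \<bar>f x\<bar> \<le> c"
  shows "(\<integral>x. f x \<partial>env_measure K P)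
       = (\<Sum>h\<in>histories K t. measure S (consistent_seeds S A h UNIV)
            * (\<integral>x. indicator (consistent_envs K P h) x * f x \<partial>env_measure K P))"
proof -
  have "(\<integral>x. f x \<partial>env_measure K P) = (\<integral>\<omega>. f (env \<omega>) \<partial>world K P S)"
    by (rule integral_world_env[OF vp S f bound, symmetric])
  also have "\<dots> = (\<integral>\<omega>. indicator {\<omega> \<in> space (world K P S). recommend A \<omega> t \<in> UNIV} \<omega> * f (env \<omega>) \<partial>world K P S)"
    by (intro Bochner_Integration.integral_cong) (auto simp: indicator_def)
  also have "\<dots> = (\<Sum>h\<in>histories K t. measure S (consistent_seeds S A h UNIV)
            * (\<integral>x. indicator (consistent_envs K P h) x * f x \<partial>env_measure K P))"
    by (rule integral_recommend_eq_sum[OF vp S va f bound])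
  finally show ?thesis .
qed

lemma thompson_proportional:
  assumes vp: "valid_priors K P" and S: "prob_space S" and va: "valid_alg K S A"
    and h: "h \<in> histories K t" and i: "i < K"
    and thompson: "0 < measure (world K P S) {\<omega> \<in> space (world K P S). history A \<omega> t = h} \<Longrightarrow>
       measure (world K P S) {\<omega> \<in> space (world K P S). history A \<omega> t = h \<and> recommend A \<omega> t = i}
       = measure (world K P S) {\<omega> \<in> space (world K P S). history A \<omega> t = h \<and> best_arm K \<omega> = i}"
    and pos: "0 < measure S (consistent_seeds S A h UNIV) * measure (env_measure K P) (consistent_envs K P h)"
  shows "measure S (consistent_seeds S A h {i}) * measure (env_measure K P) (consistent_envs K P h)
       = measure S (consistent_seeds S A h UNIV) * measure (env_measure K P) (consistent_envs K P h \<inter> best_envs K P i)"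
proof -
  let ?W = "world K P S" and ?E = "env_measure K P"
  have envs: "consistent_envs K P h \<inter> space ?E = consistent_envs K P h"
    by (auto simp: consistent_envs_def)
  have "{\<omega> \<in> space ?W. history A \<omega> t = h} = {\<omega> \<in> space ?W. history A \<omega> t = h \<and> recommend A \<omega> t \<in> UNIV \<and> env \<omega> \<in> space ?E}"
    "{\<omega> \<in> space ?W. history A \<omega> t = h \<and> recommend A \<omega> t = i} = {\<omega> \<in> space ?W. history A \<omega> t = h \<and> recommend A \<omega> t \<in> {i} \<and> env \<omega> \<in> space ?E}"
    "{\<omega> \<in> space ?W. history A \<omega> t = h \<and> best_arm K \<omega> = i} = {\<omega> \<in> space ?W. history A \<omega> t = h \<and> recommend A \<omega> t \<in> UNIV \<and> env \<omega> \<in> best_envs K P i}"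
    by (auto simp: best_arm_eq best_envs_def dest: space_world_D)
  moreover note measure_history_event[OF vp S va h, where B="space ?E" and I=UNIV]
    measure_history_event[OF vp S va h, where B="space ?E" and I="{i}"]
    measure_history_event[OF vp S va h, where B="best_envs K P i" and I=UNIV]
  ultimately show ?thesis
    using thompson pos sets_best_envs[OF vp i] envs by simp
qed

lemma gap_near_const_on_history:
  assumes vp: "valid_priors K P" and S: "prob_space S" and va: "valid_alg K S A"
    and h: "h \<in> histories K t"
    and counts: "AE \<omega> in world K P S. N \<le> num_samples A \<omega> t i \<and> N \<le> num_samples A \<omega> t j"
    and pos: "0 < measure S (consistent_seeds S A h UNIV) * measure (env_measure K P) (consistent_envs K P h)"
  shows "\<exists>y0. \<forall>x\<in>consistent_envs K P h. \<bar>gap i j (fst x) - y0\<bar> \<le> \<eta> + max (\<bar>deviation N i j x\<bar> - \<eta>) 0"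
proof -
  let ?W = "world K P S" and ?E = "env_measure K P"
  have hist_eq: "{\<omega> \<in> space ?W. history A \<omega> t = h} = {\<omega> \<in> space ?W. history A \<omega> t = h \<and> recommend A \<omega> t \<in> UNIV \<and> env \<omega> \<in> space ?E}"
    by (auto dest: space_world_D)
  moreover have "consistent_envs K P h \<inter> space ?E = consistent_envs K P h"
    by (auto simp: consistent_envs_def)
  ultimately have "measure ?W {\<omega> \<in> space ?W. history A \<omega> t = h}
      = measure S (consistent_seeds S A h UNIV) * measure ?E (consistent_envs K P h)"
    using measure_history_event[OF vp S va h, where B="space ?E" and I=UNIV] by simp
  moreover have "{\<omega> \<in> space ?W. history A \<omega> t = h} \<in> sets ?W"
    using sets_history_event[OF vp va h sets.top, where I=UNIV] by (subst hist_eq) simp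
  ultimately have "\<exists>\<omega>\<in>space ?W. history A \<omega> t = h \<and> N \<le> num_samples A \<omega> t i \<and> N \<le> num_samples A \<omega> t j"
    using pos by (intro ex_in_event_if_AE[OF counts]) auto
  then have "N \<le> arm_count i h" "N \<le> arm_count j h"
    by (auto simp: num_samples_def arm_count_def)
  have "consistent_envs K P h \<noteq> {}" using pos by auto
  then obtain x0 where x0: "x0 \<in> consistent_envs K P h" by blast
  have "\<bar>gap i j (fst x) - empirical_gap N i j x0\<bar> \<le> \<eta> + max (\<bar>deviation N i j x\<bar> - \<eta>) 0"
    if "x \<in> consistent_envs K P h" for x
    using empirical_gap_eq_if_consistent[of h x x0 N i j] that x0 \<open>N \<le> arm_count i h\<close> \<open>N \<le> arm_count j h\<close>
    by (auto simp: consistent_envs_def deviation_def)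
  then show ?thesis by blast
qed

lemma thompson_history_bound:
  assumes vp: "valid_priors K P" and S: "prob_space S" and va: "valid_alg K S A"
    and ij: "i < K" "j < K" and \<eta>: "0 \<le> \<eta>" and h: "h \<in> histories K t"
    and thompson: "\<And>h. 0 < measure (world K P S) {\<omega> \<in> space (world K P S). history A \<omega> t = h} \<Longrightarrow>
       measure (world K P S) {\<omega> \<in> space (world K P S). history A \<omega> t = h \<and> recommend A \<omega> t = i}
       = measure (world K P S) {\<omega> \<in> space (world K P S). history A \<omega> t = h \<and> best_arm K \<omega> = i}"
    and counts: "AE \<omega> in world K P S. N \<le> num_samples A \<omega> t i \<and> N \<le> num_samples A \<omega> t j"
  shows "measure S (consistent_seeds S A h UNIV) *
           ((\<integral>x. indicator (consistent_envs K P h) x * (indicator (best_envs K P i) x * gap i j (fst x)) \<partial>env_measure K P)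
            - 2 * \<eta> * measure (env_measure K P) (consistent_envs K P h \<inter> best_envs K P i)
            - (\<integral>x. indicator (consistent_envs K P h) x * max (\<bar>deviation N i j x\<bar> - \<eta>) 0 \<partial>env_measure K P))
         \<le> measure S (consistent_seeds S A h {i}) *
           (\<integral>x. indicator (consistent_envs K P h) x * gap i j (fst x) \<partial>env_measure K P)"
proof -
  interpret E: prob_space "env_measure K P" using prob_space_env_measure[OF vp] .
  interpret S: prob_space S using S .
  have Y: "integrable (env_measure K P) (\<lambda>x. gap i j (fst x))"
    using measurable_gap_env[OF vp ij] abs_gap_le by (intro E.integrable_const_bound[where B=1] AE_I2) auto
  have T: "integrable (env_measure K P) (\<lambda>x. max (\<bar>deviation N i j x\<bar> - \<eta>) 0)"
  proof (intro E.integrable_const_bound[where B=2] AE_I2)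
    show "norm (max (\<bar>deviation N i j x\<bar> - \<eta>) 0) \<le> 2" for x
      using abs_deviation_le[of N i j x] \<eta> by simp
  qed (use measurable_deviation[OF vp ij] in measurable)
  show ?thesis
  proof (rule E.weighted_cov_indicator_le[OF _ sets_best_envs[OF vp ij(1)] Y T])
    show "consistent_envs K P h \<in> sets (env_measure K P)"
      using h sets_consistent_envs[OF vp] by (simp add: histories_def)
    show "measure S (consistent_seeds S A h {i}) \<le> measure S (consistent_seeds S A h UNIV)"
      by (intro S.finite_measure_mono sets_consistent_seeds[OF va]) (auto simp: consistent_seeds_def)
    show "measure S (consistent_seeds S A h {i}) * measure (env_measure K P) (consistent_envs K P h)
        = measure S (consistent_seeds S A h UNIV) * measure (env_measure K P) (consistent_envs K P h \<inter> best_envs K P i)"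
      if "0 < measure S (consistent_seeds S A h UNIV) * measure (env_measure K P) (consistent_envs K P h)"
      using thompson_proportional[OF vp S va h ij(1) thompson that] .
    show "\<exists>y0. \<forall>x\<in>consistent_envs K P h. \<bar>gap i j (fst x) - y0\<bar> \<le> \<eta> + max (\<bar>deviation N i j x\<bar> - \<eta>) 0"
      if "0 < measure S (consistent_seeds S A h UNIV) * measure (env_measure K P) (consistent_envs K P h)"
      using gap_near_const_on_history[OF vp S va h counts that] .
  qed (use \<eta> in auto)
qed

lemma thompson_gap_lower_bound:
  assumes vp: "valid_priors K P" and S: "prob_space S" and va: "valid_alg K S A"
    and ij: "i < K" "j < K" and \<eta>: "0 \<le> \<eta>"
    and thompson: "\<And>h. 0 < measure (world K P S) {\<omega> \<in> space (world K P S). history A \<omega> t = h} \<Longrightarrow>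
       measure (world K P S) {\<omega> \<in> space (world K P S). history A \<omega> t = h \<and> recommend A \<omega> t = i}
       = measure (world K P S) {\<omega> \<in> space (world K P S). history A \<omega> t = h \<and> best_arm K \<omega> = i}"
    and counts: "AE \<omega> in world K P S. N \<le> num_samples A \<omega> t i \<and> N \<le> num_samples A \<omega> t j"
  shows "(\<integral>x. indicator (best_envs K P i) x * gap i j (fst x) \<partial>env_measure K P)
           - 2 * \<eta> * measure (env_measure K P) (best_envs K P i)
           - (\<integral>x. max (\<bar>deviation N i j x\<bar> - \<eta>) 0 \<partial>env_measure K P)
         \<le> (\<integral>\<omega>. indicator {\<omega> \<in> space (world K P S). recommend A \<omega> t = i} \<omega> * gap i j (fst (env \<omega>)) \<partial>world K P S)"
proof -
  let ?E = "env_measure K P"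
  define G where "G = best_envs K P i"
  define Y :: "env \<Rightarrow> real" where "Y x = gap i j (fst x)" for x
  define T :: "env \<Rightarrow> real" where "T x = max (\<bar>deviation N i j x\<bar> - \<eta>) 0" for x
  define B where "B h = consistent_envs K P h" for h
  define d where "d h = measure S (consistent_seeds S A h UNIV)" for h
  have [measurable]: "G \<in> sets ?E" unfolding G_def by (rule sets_best_envs[OF vp ij(1)])
  have Y[measurable]: "Y \<in> borel_measurable ?E" unfolding Y_def by (rule measurable_gap_env[OF vp ij])
  note [measurable] = measurable_deviation[OF vp ij]
  have T: "T \<in> borel_measurable ?E" unfolding T_def by measurable
  have Y_bound: "\<bar>Y x\<bar> \<le> 1" and T_bound: "\<bar>T x\<bar> \<le> 2" for x
    using abs_gap_le abs_deviation_le[of N i j x] \<eta> by (auto simp: Y_def T_def)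
  have YG_bound: "\<bar>indicator G x * Y x\<bar> \<le> 1" and G_bound: "\<bar>indicator G x :: real\<bar> \<le> 1" for x
    using Y_bound[of x] by (auto simp: indicator_def)
  have "measure ?E (B h \<inter> G) = (\<integral>x. indicator (B h) x * indicator G x \<partial>?E)" for h
    by (simp add: indicator_inter_arith[symmetric])
      (auto intro!: arg_cong[where f="measure ?E"] simp: B_def consistent_envs_def)
  then have "(\<integral>x. indicator G x * Y x \<partial>?E) - 2 * \<eta> * measure ?E G - (\<integral>x. T x \<partial>?E)
      = (\<Sum>h\<in>histories K t. d h * ((\<integral>x. indicator (B h) x * (indicator G x * Y x) \<partial>?E)
          - 2 * \<eta> * measure ?E (B h \<inter> G) - (\<integral>x. indicator (B h) x * T x \<partial>?E)))"
    using integral_env_eq_sum[OF vp S va, where f="\<lambda>x. indicator G x * Y x" and t=t, OF _ YG_bound]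
      integral_env_eq_sum[OF vp S va, where f="indicator G" and t=t, OF _ G_bound]
      integral_env_eq_sum[OF vp S va T T_bound, where t=t]
    by (simp add: B_def d_def algebra_simps sum_subtractf sum_distrib_left sum.distrib)
  also have "\<dots> \<le> (\<Sum>h\<in>histories K t. measure S (consistent_seeds S A h {i}) * (\<integral>x. indicator (B h) x * Y x \<partial>?E))"
    unfolding B_def d_def G_def Y_def T_def
    by (intro sum_mono thompson_history_bound[OF vp S va ij \<eta> _ thompson counts])
  also have "\<dots> = (\<integral>\<omega>. indicator {\<omega> \<in> space (world K P S). recommend A \<omega> t \<in> {i}} \<omega> * Y (env \<omega>) \<partial>world K P S)"
    unfolding B_def using Y_bound by (intro integral_recommend_eq_sum[symmetric] vp S va Y)
  finally show ?thesis by (simp add: G_def Y_def T_def)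
qed

section \<open>A Harris-type correlation inequality\<close>

text \<open>Chebyshev's sum inequality: for a threshold \<open>\<alpha>\<close> of \<open>f\<close> separating its values where \<open>g\<close> is
  above and below its mean, \<open>(f x - \<alpha>) (g x - E g) \<ge> 0\<close> pointwise.\<close>
lemma (in prob_space) covariance_nonneg_if_comonotone:
  fixes f g :: "'a \<Rightarrow> real"
  assumes fm: "f \<in> borel_measurable M" and gm: "g \<in> borel_measurable M"
    and f01: "\<And>x. x \<in> space M \<Longrightarrow> 0 \<le> f x \<and> f x \<le> 1"
    and g_bound: "\<And>x. x \<in> space M \<Longrightarrow> \<bar>g x\<bar> \<le> c"
    and comonotone: "\<And>x y. x \<in> space M \<Longrightarrow> y \<in> space M \<Longrightarrow> g y < g x \<Longrightarrow> f y \<le> f x"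
  shows "0 \<le> (\<integral>x. f x * (g x - (\<integral>y. g y \<partial>M)) \<partial>M)"
proof -
  define e where "e = (\<integral>x. g x \<partial>M)"
  define \<alpha> where "\<alpha> = Inf (f ` {x \<in> space M. e < g x} \<union> {1})"
  have gi: "integrable M g" by (rule integrable_const_bound[where B=c]) (use g_bound gm in auto)
  have "\<bar>f x * (g x - e)\<bar> \<le> c + \<bar>e\<bar>" if "x \<in> space M" for x
    using f01[OF that] g_bound[OF that] mult_right_mono[of "f x" 1 "\<bar>g x - e\<bar>"] by (simp add: abs_mult)
  then have fgi: "integrable M (\<lambda>x. f x * (g x - e))"
    by (intro integrable_const_bound[where B="c + \<bar>e\<bar>"]) (use fm gm in auto)
  have bdd: "bdd_below (f ` {x \<in> space M. e < g x} \<union> {1})"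
    using f01 by (intro bdd_belowI[of _ 0]) auto
  have "\<alpha> * (g x - e) \<le> f x * (g x - e)" if x: "x \<in> space M" for x
  proof (cases "e < g x")
    case True
    then have "\<alpha> \<le> f x" unfolding \<alpha>_def by (intro cInf_lower[OF _ bdd]) (use x in auto)
    then show ?thesis using True by (intro mult_right_mono) auto
  next
    case False
    then have "f x \<le> \<alpha>" unfolding \<alpha>_def by (intro cInf_greatest) (use x f01 comonotone in auto)
    then show ?thesis using False by (simp add: mult_right_mono_neg)
  qed
  then have "(\<integral>x. \<alpha> * (g x - e) \<partial>M) \<le> (\<integral>x. f x * (g x - e) \<partial>M)"
    using gi fgi by (intro integral_mono) auto
  moreover have "(\<integral>x. g x - e \<partial>M) = 0" using gi by (simp add: e_def prob_space)
  ultimately show ?thesis unfolding e_def[symmetric] by simp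
qed

lemma (in product_prob_space) integral_PiM_insert_bounded:
  fixes f :: "_ \<Rightarrow> real"
  assumes J: "finite J" "k \<notin> J" and f: "f \<in> borel_measurable (PiM (insert k J) M)"
    and bound: "\<And>x. x \<in> space (PiM (insert k J) M) \<Longrightarrow> \<bar>f x\<bar> \<le> c"
  shows "(\<integral>x. f x \<partial>PiM (insert k J) M) = (\<integral>x. (\<integral>y. f (x(k := y)) \<partial>M k) \<partial>PiM J M)"
    and "(\<lambda>x. \<integral>y. f (x(k := y)) \<partial>M k) \<in> borel_measurable (PiM J M)"
    and "\<And>x. x \<in> space (PiM J M) \<Longrightarrow> \<bar>\<integral>y. f (x(k := y)) \<partial>M k\<bar> \<le> c"
proof -
  interpret Pk: prob_space "PiM (insert k J) M" by (intro prob_space_PiM prob_space)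
  show "(\<integral>x. f x \<partial>PiM (insert k J) M) = (\<integral>x. (\<integral>y. f (x(k := y)) \<partial>M k) \<partial>PiM J M)"
    using bound f by (intro product_integral_insert[OF J] Pk.integrable_const_bound[where B=c]) auto
  have "(\<lambda>(x, y). f (x(k := y))) \<in> borel_measurable (PiM J M \<Otimes>\<^sub>M M k)"
    using measurable_compose[OF measurable_add_dim f] by (simp add: case_prod_beta')
  then show "(\<lambda>x. \<integral>y. f (x(k := y)) \<partial>M k) \<in> borel_measurable (PiM J M)"
    by (rule M.borel_measurable_lebesgue_integral)
  fix x assume x: "x \<in> space (PiM J M)"
  have upd: "(\<lambda>y. x(k := y)) \<in> measurable (M k) (PiM (insert k J) M)"
    using measurable_component_update[OF x J(2)] .
  have "(\<lambda>y. f (x(k := y))) \<in> borel_measurable (M k)"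
    using measurable_compose[OF upd f] by simp
  moreover have "\<bar>f (x(k := y))\<bar> \<le> c" if "y \<in> space (M k)" for y
    using bound measurable_space[OF upd that] by auto
  ultimately have "integrable (M k) (\<lambda>y. f (x(k := y)))" "AE y in M k. f (x(k := y)) \<le> c" "AE y in M k. - c \<le> f (x(k := y))"
    by (auto intro!: M.integrable_const_bound[where B=c] AE_I2 simp: abs_le_iff minus_le_iff)
  from M.integral_le_const[OF this(1,2)] M.integral_ge_const[OF this(1,3)]
  show "\<bar>\<integral>y. f (x(k := y)) \<partial>M k\<bar> \<le> c" by (simp add: abs_le_iff)
qed

lemma (in product_prob_space) integral_PiM_insert2:
  fixes f :: "_ \<Rightarrow> real"
  assumes R: "finite R" "i \<notin> R" "j \<notin> insert i R" and f: "f \<in> borel_measurable (PiM (insert j (insert i R)) M)"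
    and bound: "\<And>x. x \<in> space (PiM (insert j (insert i R)) M) \<Longrightarrow> \<bar>f x\<bar> \<le> c"
  shows "(\<integral>x. f x \<partial>PiM (insert j (insert i R)) M) = (\<integral>w. (\<integral>v. (\<integral>y. f (w(i := v, j := y)) \<partial>M j) \<partial>M i) \<partial>PiM R M)"
proof -
  note j = integral_PiM_insert_bounded[OF finite.insertI[OF R(1), of i] R(3) f bound]
  note i = integral_PiM_insert_bounded[OF R(1,2) j(2,3)]
  show ?thesis using j(1) i(1) by simp
qed

lemma (in product_prob_space) fiber_covariance_nonneg:
  fixes f :: "'a \<Rightarrow> real" and G :: "'a \<Rightarrow> 'a \<Rightarrow> real"
  assumes G: "(\<lambda>(v, y). G v y) \<in> borel_measurable (M i \<Otimes>\<^sub>M M j)" and G_bound: "\<And>v y. \<bar>G v y\<bar> \<le> 1"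
    and f: "f \<in> borel_measurable (M i)" and f01: "\<And>v. 0 \<le> f v \<and> f v \<le> 1"
    and comonotone: "\<And>v v'. v \<in> space (M i) \<Longrightarrow> v' \<in> space (M i) \<Longrightarrow>
      (\<integral>y. G v' y \<partial>M j) < (\<integral>y. G v y \<partial>M j) \<Longrightarrow> f v' \<le> f v"
  shows "0 \<le> (\<integral>v. (\<integral>y. f v * G v y - (\<integral>v. (\<integral>y. G v y \<partial>M j) \<partial>M i) * f v \<partial>M j) \<partial>M i)"
proof -
  define b where "b v = (\<integral>y. G v y \<partial>M j)" for v
  have Gy_int: "integrable (M j) (\<lambda>y. G v y)" if "v \<in> space (M i)" for v
    using measurable_Pair2[OF G that] G_bound by (intro M.integrable_const_bound[where B=1]) auto
  have b: "b \<in> borel_measurable (M i)"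
    unfolding b_def using G by (rule M.borel_measurable_lebesgue_integral)
  have b_bound: "\<bar>b v\<bar> \<le> 1" if "v \<in> space (M i)" for v
    using Gy_int[OF that] G_bound M.integral_le_const[of j "\<lambda>y. G v y" 1] M.integral_ge_const[of j "\<lambda>y. G v y" "-1"]
    by (auto simp: b_def abs_le_iff)
  have "(\<integral>y. f v * G v y - (\<integral>v. b v \<partial>M i) * f v \<partial>M j) = f v * (b v - (\<integral>v. b v \<partial>M i))"
    if "v \<in> space (M i)" for v
    using Gy_int[OF that] by (simp add: b_def M.prob_space algebra_simps)
  then have "(\<integral>v. (\<integral>y. f v * G v y - (\<integral>v. b v \<partial>M i) * f v \<partial>M j) \<partial>M i)
      = (\<integral>v. f v * (b v - (\<integral>v. b v \<partial>M i)) \<partial>M i)"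
    by (intro Bochner_Integration.integral_cong) auto
  also have "\<dots> \<ge> 0"
    using f01 b_bound comonotone by (intro M.covariance_nonneg_if_comonotone[OF f b]) (auto simp: b_def)
  finally show ?thesis by (simp add: b_def)
qed

text \<open>A Harris-type inequality: \<open>F\<close> ignores coordinate \<open>j\<close> and is comonotone in coordinate \<open>i\<close>
  with \<open>v \<mapsto> E[G v Y\<^sub>j]\<close>, so conditioning on the remaining coordinates reduces it to Chebyshev's
  inequality in coordinate \<open>i\<close>.\<close>
lemma (in product_prob_space) integral_PiM_mult_ge_comonotone:
  fixes F :: "('i \<Rightarrow> 'a) \<Rightarrow> real" and G :: "'a \<Rightarrow> 'a \<Rightarrow> real"
  assumes R: "finite R" "i \<notin> R" "j \<notin> insert i R"
    and F_i: "F \<in> borel_measurable (PiM (insert i R) M)"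
    and F_ij: "F \<in> borel_measurable (PiM (insert j (insert i R)) M)"
    and F01: "\<And>a. 0 \<le> F a \<and> F a \<le> 1" and F_indep: "\<And>a y. F (a(j := y)) = F a"
    and G: "(\<lambda>(v, y). G v y) \<in> borel_measurable (M i \<Otimes>\<^sub>M M j)" and G_bound: "\<And>v y. \<bar>G v y\<bar> \<le> 1"
    and comonotone: "\<And>a v v'. a \<in> space (PiM R M) \<Longrightarrow> v \<in> space (M i) \<Longrightarrow> v' \<in> space (M i) \<Longrightarrow>
      (\<integral>y. G v' y \<partial>M j) < (\<integral>y. G v y \<partial>M j) \<Longrightarrow> F (a(i := v')) \<le> F (a(i := v))"
  shows "(\<integral>a. G (a i) (a j) \<partial>PiM (insert j (insert i R)) M) * (\<integral>a. F a \<partial>PiM (insert j (insert i R)) M)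
       \<le> (\<integral>a. F a * G (a i) (a j) \<partial>PiM (insert j (insert i R)) M)"
proof -
  let ?\<Pi> = "PiM (insert j (insert i R)) M"
  interpret \<Pi>: prob_space ?\<Pi> by (intro prob_space_PiM prob_space)
  interpret \<Pi>R: prob_space "PiM R M" by (intro prob_space_PiM prob_space)
  define \<beta> where "\<beta> = (\<integral>v. (\<integral>y. G v y \<partial>M j) \<partial>M i)"
  have ij: "i \<noteq> j" "i \<in> insert j (insert i R)" "j \<in> insert j (insert i R)" using R by auto
  have "(\<lambda>a. (a i, a j)) \<in> measurable ?\<Pi> (M i \<Otimes>\<^sub>M M j)"
    using ij by (intro measurable_Pair measurable_component_singleton) auto
  from measurable_compose[OF this G] have G\<Pi>: "(\<lambda>a. G (a i) (a j)) \<in> borel_measurable ?\<Pi>"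
    by simp
  have int_G: "(\<integral>a. G (a i) (a j) \<partial>?\<Pi>) = \<beta>"
    using integral_PiM_insert2[OF R G\<Pi>, of 1] G_bound ij by (simp add: \<beta>_def \<Pi>R.prob_space)
  have f: "(\<lambda>a. F a * G (a i) (a j) - \<beta> * F a) \<in> borel_measurable ?\<Pi>"
    using F_ij G\<Pi> by measurable
  have f_bound: "\<bar>F a * G (a i) (a j) - \<beta> * F a\<bar> \<le> 1 + \<bar>\<beta>\<bar>" for a
  proof -
    have "\<bar>F a * G (a i) (a j)\<bar> \<le> 1" using F01[of a] G_bound by (simp add: abs_mult mult_le_one)
    moreover have "\<bar>\<beta> * F a\<bar> \<le> \<bar>\<beta>\<bar>" using F01[of a] by (simp add: abs_mult mult_left_le)
    ultimately show ?thesis by linarith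
  qed
  have "(\<integral>a. F a * G (a i) (a j) - \<beta> * F a \<partial>?\<Pi>)
      = (\<integral>w. (\<integral>v. (\<integral>y. F (w(i := v)) * G v y - \<beta> * F (w(i := v)) \<partial>M j) \<partial>M i) \<partial>PiM R M)"
    using integral_PiM_insert2[OF R f f_bound] ij by (simp add: F_indep)
  also have "\<dots> \<ge> 0"
  proof (rule Bochner_Integration.integral_nonneg)
    fix w assume w: "w \<in> space (PiM R M)"
    have "(\<lambda>v. w(i := v)) \<in> measurable (M i) (PiM (insert i R) M)"
      using measurable_component_update[OF w R(2)] .
    from measurable_compose[OF this F_i]
    show "0 \<le> (\<integral>v. (\<integral>y. F (w(i := v)) * G v y - \<beta> * F (w(i := v)) \<partial>M j) \<partial>M i)"
      unfolding \<beta>_def using F01 comonotone[OF w] by (intro fiber_covariance_nonneg[OF G G_bound]) auto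
  qed
  finally have "0 \<le> (\<integral>a. F a * G (a i) (a j) - \<beta> * F a \<partial>?\<Pi>)" .
  moreover have "integrable ?\<Pi> F" "integrable ?\<Pi> (\<lambda>a. F a * G (a i) (a j))"
    using F_ij G\<Pi> F01 G_bound by (auto intro!: \<Pi>.integrable_const_bound[where B=1] AE_I2 simp: abs_mult mult_le_one)
  ultimately show ?thesis
    by (simp add: int_G mult.commute)
qed

definition beats_others :: "nat \<Rightarrow> nat \<Rightarrow> nat \<Rightarrow> (nat \<Rightarrow> real) \<Rightarrow> bool" where
  "beats_others K i j a \<longleftrightarrow> (\<forall>k\<in>{..<K} - {i, j}. a k \<le> a i \<and> (k < i \<longrightarrow> a k < a i))"

lemma beats_others_if_best_index: "i < K \<Longrightarrow> best_index K a = i \<Longrightarrow> beats_others K i j a"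
  unfolding beats_others_def using best_index_eq_iff[of i K a] by auto

lemma beats_others_upd_other: "i \<noteq> j \<Longrightarrow> beats_others K i j (a(j := y)) = beats_others K i j a"
  unfolding beats_others_def by auto

lemma beats_others_upd_mono:
  "beats_others K i j (a(i := v')) \<Longrightarrow> v' \<le> v \<Longrightarrow> beats_others K i j (a(i := v))"
  unfolding beats_others_def by (auto intro: order_trans order.strict_trans2)

lemma of_bool_best_index_mult_gap:
  assumes ij: "i < K" "j < K"
  shows "of_bool (best_index K a = i) * gap i j a = of_bool (beats_others K i j a) * max (gap i j a) 0"
proof (cases "best_index K a = i")
  case True
  then have "a j \<le> a i" using best_index_eq_iff[OF ij(1)] ij(2) by blast
  then show ?thesis using True beats_others_if_best_index[OF ij(1) True] clip01_mono by (simp add: gap_def)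
next
  case False
  have "gap i j a \<le> 0" if beats: "beats_others K i j a"
  proof -
    have "a i \<le> a j"
    proof (rule ccontr)
      assume "\<not> a i \<le> a j"
      then have "a k \<le> a i \<and> (k < i \<longrightarrow> a k < a i)" if "k < K" for k
        using beats that unfolding beats_others_def by (cases "k = i \<or> k = j") auto
      then show False using False best_index_eq_iff[OF ij(1)] ij(1) by auto
    qed
    then show ?thesis using clip01_mono by (simp add: gap_def)
  qed
  then show ?thesis using False by auto
qed

lemma measurable_beats_others:
  assumes borel: "\<And>k. sets (M k) = sets borel" and J: "insert i ({..<K} - {i, j}) \<subseteq> J"
  shows "(\<lambda>a. of_bool (beats_others K i j a) :: real) \<in> borel_measurable (PiM J M)"
proof -
  have "i \<in> J" using J by auto
  note mi = measurable_component_borel[OF this borel]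
  have "Measurable.pred (PiM J M) (\<lambda>a. a k \<le> a i \<and> (k < i \<longrightarrow> a k < a i))" if "k \<in> {..<K} - {i, j}" for k
  proof -
    have "k \<in> J" using that J by auto
    note mk = measurable_component_borel[OF this borel]
    have [measurable]: "Measurable.pred (PiM J M) (\<lambda>a. a k \<le> a i)" "Measurable.pred (PiM J M) (\<lambda>a. a k < a i)"
      unfolding pred_def by (rule borel_measurable_le[OF mk mi] borel_measurable_less[OF mk mi])+
    show ?thesis by measurable
  qed
  then have "Measurable.pred (PiM J M) (beats_others K i j)"
    unfolding beats_others_def using J by (intro pred_intros_countable_bounded(3)) auto
  then show ?thesis by measurable
qed

lemma beats_others_gap_correlation:
  fixes M :: "nat \<Rightarrow> real measure"
  assumes prob: "\<And>k. prob_space (M k)" and borel: "\<And>k. sets (M k) = sets borel"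
    and ij: "i < K" "j < K" "i \<noteq> j"
  shows "(\<integral>a. max (gap i j a) 0 \<partial>PiM {..<K} M) * (\<integral>a. of_bool (beats_others K i j a) \<partial>PiM {..<K} M)
       \<le> (\<integral>a. of_bool (beats_others K i j a) * max (gap i j a) 0 \<partial>PiM {..<K} M)"
proof -
  interpret product_prob_space M UNIV by (rule product_prob_spaceI) (rule prob)
  define R where "R = {..<K} - {i, j}"
  have R: "finite R" "i \<notin> R" "j \<notin> insert i R" and K_eq: "{..<K} = insert j (insert i R)"
    using ij by (auto simp: R_def)
  define F where "F a = (of_bool (beats_others K i j a) :: real)" for a
  define G where "G v y = max (clip01 v - clip01 y) 0" for v y
  have F: "F \<in> borel_measurable (PiM J M)" if "insert i R \<subseteq> J" for J
    unfolding F_def using that by (intro measurable_beats_others[OF borel]) (simp add: R_def)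
  have "(\<lambda>(v, y). G v y) \<in> borel_measurable (borel \<Otimes>\<^sub>M borel)"
    unfolding G_def clip01_def by measurable
  then have G: "(\<lambda>(v, y). G v y) \<in> borel_measurable (M i \<Otimes>\<^sub>M M j)"
    by (simp add: borel cong: measurable_cong_sets[OF sets_pair_measure_cong])
  have G_bound: "\<bar>G v y\<bar> \<le> 1" for v y
    using clip01_bounds[of v] clip01_bounds[of y] by (auto simp: G_def)
  have G_int: "integrable (M j) (G v)" if "v \<in> space (M i)" for v
    using measurable_Pair2[OF G that] G_bound by (intro M.integrable_const_bound[where B=1] AE_I2) auto
  have G_mono: "(\<integral>y. G v y \<partial>M j) \<le> (\<integral>y. G v' y \<partial>M j)" if "v \<le> v'" "v \<in> space (M i)" "v' \<in> space (M i)" for v v'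
    using that clip01_mono[OF that(1)] by (intro integral_mono G_int) (auto simp: G_def)
  have "(\<integral>a. G (a i) (a j) \<partial>PiM {..<K} M) * (\<integral>a. F a \<partial>PiM {..<K} M) \<le> (\<integral>a. F a * G (a i) (a j) \<partial>PiM {..<K} M)"
    unfolding K_eq
  proof (rule integral_PiM_mult_ge_comonotone[OF R _ _ _ _ G G_bound])
    show "F \<in> borel_measurable (PiM (insert i R) M)" "F \<in> borel_measurable (PiM (insert j (insert i R)) M)"
      by (auto intro!: F)
    show "F (a(i := v')) \<le> F (a(i := v))"
      if "v \<in> space (M i)" "v' \<in> space (M i)" "(\<integral>y. G v' y \<partial>M j) < (\<integral>y. G v y \<partial>M j)" for a v v'
      using that G_mono[of v v'] beats_others_upd_mono[of K i j a v' v] by (force simp: F_def)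
  qed (use ij beats_others_upd_other in \<open>auto simp: F_def\<close>)
  moreover have "G (a i) (a j) = max (gap i j a) 0" for a by (simp add: G_def gap_def)
  ultimately show ?thesis by (simp add: F_def)
qed

lemma best_index_gap_correlation:
  fixes M :: "nat \<Rightarrow> real measure"
  assumes prob: "\<And>k. prob_space (M k)" and borel: "\<And>k. sets (M k) = sets borel"
    and ij: "i < K" "j < K" "i \<noteq> j"
  shows "(\<integral>a. max (gap i j a) 0 \<partial>PiM {..<K} M) * (\<integral>a. of_bool (best_index K a = i) \<partial>PiM {..<K} M)
       \<le> (\<integral>a. of_bool (best_index K a = i) * gap i j a \<partial>PiM {..<K} M)"
proof -
  let ?\<Pi> = "PiM {..<K} M"
  interpret \<Pi>: prob_space ?\<Pi> using prob by (intro prob_space_PiM)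
  have "(\<integral>a. of_bool (best_index K a = i) \<partial>?\<Pi>) \<le> (\<integral>a. of_bool (beats_others K i j a) \<partial>?\<Pi> :: real)"
  proof (intro integral_mono \<Pi>.integrable_const_bound[where B=1] AE_I2)
    show "(\<lambda>a. of_bool (beats_others K i j a) :: real) \<in> borel_measurable ?\<Pi>"
      using ij by (intro measurable_beats_others[OF borel]) auto
    have "Measurable.pred ?\<Pi> (\<lambda>a. best_index K a = i)"
      using borel ij(1) by (intro measurable_best_index)
    then show "(\<lambda>a. of_bool (best_index K a = i) :: real) \<in> borel_measurable ?\<Pi>"
      by measurable
  qed (use beats_others_if_best_index[OF ij(1)] in auto)
  moreover have "0 \<le> (\<integral>a. max (gap i j a) 0 \<partial>?\<Pi>)" by simp
  ultimately have "(\<integral>a. max (gap i j a) 0 \<partial>?\<Pi>) * (\<integral>a. of_bool (best_index K a = i) \<partial>?\<Pi>)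
      \<le> (\<integral>a. of_bool (beats_others K i j a) * max (gap i j a) 0 \<partial>?\<Pi>)"
    using beats_others_gap_correlation[OF prob borel ij] by (meson mult_left_mono order_trans)
  then show ?thesis
    using of_bool_best_index_mult_gap[OF ij(1,2)] by simp
qed

text \<open>The priors extended by dummy distributions to all indices, so that they form a
  \<open>product_prob_space\<close>.\<close>
definition padded_prior :: "nat \<Rightarrow> (nat \<Rightarrow> real measure) \<Rightarrow> nat \<Rightarrow> real measure" where
  "padded_prior K P k = (if k < K then P k else uniform_measure lborel {0..1})"

lemma prior_measure_eq_padded: "prior_measure K P = PiM {..<K} (padded_prior K P)"
  unfolding prior_measure_def by (rule PiM_cong) (auto simp: padded_prior_def)

lemma integral_env_fst:
  fixes f :: "(nat \<Rightarrow> real) \<Rightarrow> real"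
  assumes vp: "valid_priors K P" and f: "f \<in> borel_measurable (prior_measure K P)" and bound: "\<And>m. \<bar>f m\<bar> \<le> c"
  shows "(\<integral>x. f (fst x) \<partial>env_measure K P) = (\<integral>m. f m \<partial>prior_measure K P)"
proof -
  interpret PS: pair_prob_space "prior_measure K P" "sample_measure K"
    using prob_space_prior_measure[OF vp] prob_space_sample_measure
    by (simp add: pair_prob_space_def pair_sigma_finite_def prob_space_imp_sigma_finite)
  have "integrable (prior_measure K P \<Otimes>\<^sub>M sample_measure K) (\<lambda>x. f (fst x))"
    using f bound by (intro PS.integrable_const_bound[where B=c]) auto
  from PS.integral_fst'[OF this] show ?thesis
    by (simp add: env_measure_def PS.M2.prob_space)
qed

lemma best_gap_correlation:
  assumes vp: "valid_priors K P" and ij: "i < K" "j < K" "i \<noteq> j"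
  shows "(\<integral>x. max (gap i j (fst x)) 0 \<partial>env_measure K P) * measure (env_measure K P) (best_envs K P i)
       \<le> (\<integral>x. indicator (best_envs K P i) x * gap i j (fst x) \<partial>env_measure K P)"
proof -
  let ?E = "env_measure K P" and ?Q = "prior_measure K P"
  have prob: "prob_space (padded_prior K P k)" and borel: "sets (padded_prior K P k) = sets borel" for k
    using vp prob_space_uniform_01 by (auto simp: padded_prior_def valid_priors_def)
  have [measurable]: "(\<lambda>m. m k) \<in> borel_measurable ?Q" if "k < K" for k
    unfolding prior_measure_def using vp that by (intro measurable_component_borel) (auto simp: valid_priors_def)
  have [measurable]: "Measurable.pred ?Q (\<lambda>m. best_index K m = i)"
    unfolding prior_measure_def using vp ij by (intro measurable_best_index) (auto simp: valid_priors_def)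
  have [measurable]: "gap i j \<in> borel_measurable ?Q"
    using ij unfolding gap_def clip01_def by measurable
  have best: "indicator (best_envs K P i) x = (of_bool (best_index K (fst x) = i) :: real)" if "x \<in> space ?E" for x
    using that by (simp add: best_envs_def indicator_def)
  have "best_envs K P i \<inter> space ?E = best_envs K P i" by (auto simp: best_envs_def)
  then have "measure ?E (best_envs K P i) = (\<integral>x. indicator (best_envs K P i) x \<partial>?E)"
    by simp
  also have "\<dots> = (\<integral>x. of_bool (best_index K (fst x) = i) \<partial>?E)"
    using best by (intro Bochner_Integration.integral_cong) auto
  also have "\<dots> = (\<integral>m. of_bool (best_index K m = i) \<partial>?Q)"
    by (rule integral_env_fst[OF vp, where c=1]) auto
  finally have "measure ?E (best_envs K P i) = (\<integral>m. of_bool (best_index K m = i) \<partial>?Q)" .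
  moreover have "(\<integral>x. indicator (best_envs K P i) x * gap i j (fst x) \<partial>?E)
      = (\<integral>x. of_bool (best_index K (fst x) = i) * gap i j (fst x) \<partial>?E)"
    using best by (intro Bochner_Integration.integral_cong) auto
  moreover have "\<dots> = (\<integral>m. of_bool (best_index K m = i) * gap i j m \<partial>?Q)"
    using abs_gap_le[of i j] by (intro integral_env_fst[OF vp, where c=1]) (auto simp: abs_mult)
  moreover have "(\<integral>x. max (gap i j (fst x)) 0 \<partial>?E) = (\<integral>m. max (gap i j m) 0 \<partial>?Q)"
    using abs_gap_le[of i j] by (intro integral_env_fst[OF vp, where c=1]) (auto simp: abs_le_iff)
  ultimately show ?thesis
    using best_index_gap_correlation[OF prob borel ij] by (simp add: prior_measure_eq_padded)
qed

section \<open>Hoeffding's bound for the empirical gap\<close>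

lemma bernoulli_mgf_le:
  fixes x s :: real
  assumes x: "0 \<le> x" "x \<le> 1"
  shows "x * exp (s * (x - 1)) + (1 - x) * exp (s * x) \<le> exp (s\<^sup>2 / 8)"
proof (cases "s \<ge> 0")
  case True
  define p where "p = 1 - x"
  have p: "0 \<le> p" using x by (simp add: p_def)
  have "1 \<le> exp s" using True by simp
  then have pos: "0 < 1 + p * (exp s - 1)" using p by (smt (verit) mult_nonneg_nonneg)
  have "- s * p + ln (1 + p * (exp s - 1)) \<le> s\<^sup>2 / 8" by (rule Hoeffdings_lemma_aux[OF True p])
  then have "exp (- s * p + ln (1 + p * (exp s - 1))) \<le> exp (s\<^sup>2 / 8)" by simp
  moreover have "exp (- s * p + ln (1 + p * (exp s - 1))) = x * exp (s * (x - 1)) + (1 - x) * exp (s * x)"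
    using pos by (simp add: exp_add p_def exp_diff algebra_simps mult_exp_exp[symmetric] exp_minus field_simps)
  ultimately show ?thesis by linarith
next
  case False
  define h where "h = - s"
  have h: "0 \<le> h" using False by (simp add: h_def)
  have "1 \<le> exp h" using h by simp
  then have pos: "0 < 1 + x * (exp h - 1)" using x by (smt (verit) mult_nonneg_nonneg)
  have "- h * x + ln (1 + x * (exp h - 1)) \<le> h\<^sup>2 / 8" by (rule Hoeffdings_lemma_aux[OF h x(1)])
  then have "exp (- h * x + ln (1 + x * (exp h - 1))) \<le> exp (s\<^sup>2 / 8)" by (simp add: h_def)
  moreover have "exp (- h * x + ln (1 + x * (exp h - 1))) = x * exp (s * (x - 1)) + (1 - x) * exp (s * x)"
    using pos by (simp add: exp_add h_def exp_diff algebra_simps mult_exp_exp[symmetric] exp_minus field_simps)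
  ultimately show ?thesis by linarith
qed

lemma uniform_mgf_le:
  fixes x s :: real
  assumes x: "0 \<le> x" "x \<le> 1"
  shows "(\<integral>u. exp (s * (x - of_bool (u < x))) \<partial>uniform_measure lborel {0..1}) \<le> exp (s\<^sup>2 / 8)"
proof -
  let ?U = "uniform_measure lborel {0..1::real}"
  interpret U: prob_space ?U by (rule prob_space_uniform_01)
  have "measure ?U {..<x} = measure lborel ({0..1} \<inter> {..<x}) / measure lborel {0..1::real}"
    by (subst measure_uniform_measure) auto
  also have "{0..1} \<inter> {..<x} = {0..<x}" using x by auto
  finally have measure_less: "measure ?U {..<x} = x" using x by simp
  have "integrable ?U (indicator {..<x} :: real \<Rightarrow> real)"
    by (rule integrable_real_indicator) (auto simp: U.emeasure_eq_measure)
  have "(\<integral>u. exp (s * (x - of_bool (u < x))) \<partial>?U)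
      = (\<integral>u. exp (s * x) + (exp (s * (x - 1)) - exp (s * x)) * indicator {..<x} u \<partial>?U)"
    by (intro Bochner_Integration.integral_cong) (auto simp: indicator_def)
  also have "\<dots> = exp (s * x) + (exp (s * (x - 1)) - exp (s * x)) * measure ?U {..<x}"
    using \<open>integrable ?U _\<close> by (simp add: U.prob_space)
  also have "\<dots> = x * exp (s * (x - 1)) + (1 - x) * exp (s * x)"
    using measure_less by (simp add: algebra_simps)
  finally have "(\<integral>u. exp (s * (x - of_bool (u < x))) \<partial>?U) = x * exp (s * (x - 1)) + (1 - x) * exp (s * x)" .
  then show ?thesis using bernoulli_mgf_le[OF x] by simp
qed

text \<open>Given the means, \<open>\<theta>\<close> times the deviation is a sum of \<open>2 N\<close> independent centred terms, one per
  sample of arms \<open>i\<close> and \<open>j\<close>.\<close>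
lemma deviation_eq_sum:
  assumes a: "a i \<in> {0..1}" "a j \<in> {0..1}" and ij: "i \<noteq> j" and N: "0 < N"
  shows "\<theta> * deviation N i j (a, b)
       = (\<Sum>\<iota>\<in>{i, j} \<times> {..<N}. (if fst \<iota> = i then \<theta> / N else - \<theta> / N) * (a (fst \<iota>) - of_bool (b \<iota> < a (fst \<iota>))))"
proof -
  let ?g = "\<lambda>\<iota>. (if fst \<iota> = i then \<theta> / N else - \<theta> / N) * (a (fst \<iota>) - of_bool (b \<iota> < a (fst \<iota>)))"
  have "(\<Sum>\<iota>\<in>{i, j} \<times> {..<N}. ?g \<iota>) = (\<Sum>k<N. ?g (i, k)) + (\<Sum>k<N. ?g (j, k))"
    using ij by (simp add: sum.cartesian_product')
  also have "\<dots> = \<theta> / N * (\<Sum>k<N. (a i - a j) - (of_bool (b (i, k) < a i) - of_bool (b (j, k) < a j)))"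
    using ij by (simp add: sum.distrib[symmetric] sum_distrib_left algebra_simps)
  also have "\<dots> = \<theta> / N * (N * (a i - a j) - (\<Sum>k<N. of_bool (b (i, k) < a i) - of_bool (b (j, k) < a j)))"
    by (subst sum_subtractf) simp
  also have "\<dots> = \<theta> * deviation N i j (a, b)"
    using a N by (simp add: deviation_def gap_def empirical_gap_def clip01_id field_simps)
  finally show ?thesis by simp
qed

lemma integral_sample_measure_prod:
  fixes \<psi> :: "nat \<times> nat \<Rightarrow> real \<Rightarrow> real"
  assumes J: "finite J" "J \<subseteq> {..<K} \<times> UNIV"
    and \<psi>: "\<And>\<iota>. \<iota> \<in> J \<Longrightarrow> integrable (uniform_measure lborel {0..1}) (\<psi> \<iota>)"
  shows "(\<integral>b. (\<Prod>\<iota>\<in>J. \<psi> \<iota> (b \<iota>)) \<partial>sample_measure K) = (\<Prod>\<iota>\<in>J. \<integral>u. \<psi> \<iota> u \<partial>uniform_measure lborel {0..1})"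
proof -
  let ?U = "uniform_measure lborel {0..1::real}"
  interpret PS: product_prob_space "\<lambda>_::nat \<times> nat. ?U" "{..<K} \<times> UNIV"
    by (intro product_prob_spaceI prob_space_uniform_01)
  have [measurable]: "\<psi> \<iota> \<in> borel_measurable ?U" if "\<iota> \<in> J" for \<iota>
    using \<psi>[OF that] by (rule borel_measurable_integrable)
  have "(\<integral>b. (\<Prod>\<iota>\<in>J. \<psi> \<iota> (b \<iota>)) \<partial>sample_measure K)
      = (\<integral>b. (\<Prod>\<iota>\<in>J. \<psi> \<iota> (b \<iota>)) \<partial>distr (sample_measure K) (PiM J (\<lambda>_. ?U)) (\<lambda>b. restrict b J))"
    unfolding sample_measure_def
    by (subst integral_distr) (auto intro!: measurable_restrict_subset[OF J(2)] Bochner_Integration.integral_cong)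
  also have "\<dots> = (\<Prod>\<iota>\<in>J. \<integral>u. \<psi> \<iota> u \<partial>?U)"
    unfolding sample_measure_def PS.distr_PiM_restrict_finite[OF J]
    by (intro PS.product_integral_prod[OF J(1)] \<psi>) auto
  finally show ?thesis .
qed

lemma integral_exp_deviation_samples_le:
  assumes ij: "i < K" "j < K" "i \<noteq> j" and N: "0 < N" and a: "a i \<in> {0..1}" "a j \<in> {0..1}"
  shows "(\<integral>b. exp (\<theta> * deviation N i j (a, b)) \<partial>sample_measure K) \<le> exp (\<theta>\<^sup>2 / (4 * N))"
proof -
  let ?U = "uniform_measure lborel {0..1::real}"
  interpret U: prob_space ?U by (rule prob_space_uniform_01)
  define J where "J = {i, j} \<times> {..<N}"
  define c where "c \<iota> = (if fst \<iota> = i then \<theta> / N else - \<theta> / N)" for \<iota> :: "nat \<times> nat"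
  define \<psi> where "\<psi> \<iota> u = exp (c \<iota> * (a (fst \<iota>) - of_bool (u < a (fst \<iota>))))" for \<iota> u
  have J: "finite J" "J \<subseteq> {..<K} \<times> UNIV" "card J = 2 * N"
    using ij by (auto simp: J_def card_cartesian_product)
  have a_fst: "a (fst \<iota>) \<in> {0..1}" if "\<iota> \<in> J" for \<iota> using that a by (auto simp: J_def)
  have "\<bar>c \<iota> * (a (fst \<iota>) - of_bool (u < a (fst \<iota>)))\<bar> \<le> \<bar>\<theta>\<bar> / N" if "\<iota> \<in> J" for \<iota> u
  proof -
    have "\<bar>a (fst \<iota>) - of_bool (u < a (fst \<iota>))\<bar> \<le> 1" using a_fst[OF that] by auto
    moreover have "\<bar>c \<iota>\<bar> = \<bar>\<theta>\<bar> / N" by (simp add: c_def)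
    ultimately show ?thesis
      by (simp only: abs_mult) (metis abs_ge_zero mult_left_le)
  qed
  then have "\<bar>\<psi> \<iota> u\<bar> \<le> exp (\<bar>\<theta>\<bar> / N)" if "\<iota> \<in> J" for \<iota> u
    using that by (simp add: \<psi>_def abs_le_iff)
  then have \<psi>_int: "integrable ?U (\<psi> \<iota>)" if "\<iota> \<in> J" for \<iota>
  proof (intro U.integrable_const_bound[where B="exp (\<bar>\<theta>\<bar> / N)"] AE_I2)
    show "\<psi> \<iota> \<in> borel_measurable ?U" unfolding \<psi>_def by (simp cong: measurable_cong_sets)
  qed (use that in auto)
  have "(\<integral>b. exp (\<theta> * deviation N i j (a, b)) \<partial>sample_measure K) = (\<integral>b. (\<Prod>\<iota>\<in>J. \<psi> \<iota> (b \<iota>)) \<partial>sample_measure K)"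
    using deviation_eq_sum[OF a ij(3) N] by (simp add: J_def c_def \<psi>_def exp_sum)
  also have "\<dots> = (\<Prod>\<iota>\<in>J. \<integral>u. \<psi> \<iota> u \<partial>?U)"
    using J(1,2) \<psi>_int by (rule integral_sample_measure_prod)
  also have "\<dots> \<le> (\<Prod>\<iota>\<in>J. exp ((\<theta> / N)\<^sup>2 / 8))"
  proof (rule prod_mono)
    fix \<iota> assume "\<iota> \<in> J"
    have "(\<integral>u. \<psi> \<iota> u \<partial>?U) \<le> exp ((c \<iota>)\<^sup>2 / 8)"
      unfolding \<psi>_def using a_fst[OF \<open>\<iota> \<in> J\<close>] by (intro uniform_mgf_le) auto
    moreover have "(c \<iota>)\<^sup>2 = (\<theta> / N)\<^sup>2" by (simp add: c_def)
    moreover have "0 \<le> (\<integral>u. \<psi> \<iota> u \<partial>?U)" by (simp add: \<psi>_def)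
    ultimately show "0 \<le> (\<integral>u. \<psi> \<iota> u \<partial>?U) \<and> (\<integral>u. \<psi> \<iota> u \<partial>?U) \<le> exp ((\<theta> / N)\<^sup>2 / 8)"
      by simp
  qed
  also have "\<dots> = exp (\<theta>\<^sup>2 / (4 * N))"
    using J(3) N by (simp add: exp_of_nat_mult[symmetric] power2_eq_square field_simps)
  finally show ?thesis .
qed

lemma AE_prior_mean_01:
  assumes vp: "valid_priors K P" and k: "k < K"
  shows "AE m in prior_measure K P. m k \<in> {0..1}"
proof -
  interpret Pk: prob_space "P k" using vp k by (simp add: valid_priors_def)
  have "{0..1::real} \<in> sets (P k)" "emeasure (P k) {0..1} = 1"
    using vp k by (auto simp: valid_priors_def)
  then have "AE x in P k. x \<in> {0..1}"
    by (subst Pk.AE_in_set_eq_1) (auto simp: Pk.emeasure_eq_measure)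
  then show ?thesis unfolding prior_measure_def
    by (rule AE_PiM_component[rotated 2]) (use vp k in \<open>auto simp: valid_priors_def\<close>)
qed

lemma abs_exp_mult_deviation_le: "\<bar>exp (c * deviation N i j x)\<bar> \<le> exp (2 * \<bar>c\<bar>)"
proof -
  have "c * deviation N i j x \<le> \<bar>c\<bar> * \<bar>deviation N i j x\<bar>" by (metis abs_ge_self abs_mult)
  also have "\<dots> \<le> \<bar>c\<bar> * 2" using abs_deviation_le by (intro mult_left_mono) auto
  finally show ?thesis by simp
qed

lemma integral_exp_deviation_le:
  assumes vp: "valid_priors K P" and ij: "i < K" "j < K" "i \<noteq> j" and N: "0 < N"
  shows "(\<integral>x. exp (\<theta> * deviation N i j x) \<partial>env_measure K P) \<le> exp (\<theta>\<^sup>2 / (4 * N))"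
proof -
  interpret Q: prob_space "prior_measure K P" using prob_space_prior_measure[OF vp] .
  interpret PS: pair_prob_space "prior_measure K P" "sample_measure K"
    using prob_space_sample_measure by (simp add: pair_prob_space_def pair_sigma_finite_def
        Q.prob_space_axioms prob_space_imp_sigma_finite)
  have m: "(\<lambda>x. exp (\<theta> * deviation N i j x)) \<in> borel_measurable (prior_measure K P \<Otimes>\<^sub>M sample_measure K)"
    using measurable_deviation[OF vp ij(1,2), of N] unfolding env_measure_def by measurable
  have int: "integrable (prior_measure K P \<Otimes>\<^sub>M sample_measure K) (\<lambda>x. exp (\<theta> * deviation N i j x))"
    using m abs_exp_mult_deviation_le by (intro PS.integrable_const_bound[where B="exp (2 * \<bar>\<theta>\<bar>)"] AE_I2) auto
  have "(\<integral>x. exp (\<theta> * deviation N i j x) \<partial>env_measure K P)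
      = (\<integral>a. (\<integral>b. exp (\<theta> * deviation N i j (a, b)) \<partial>sample_measure K) \<partial>prior_measure K P)"
    unfolding env_measure_def using PS.integral_fst'[OF int] by simp
  also have "\<dots> \<le> (\<integral>a. exp (\<theta>\<^sup>2 / (4 * N)) \<partial>prior_measure K P)"
  proof (rule integral_mono_AE)
    show "integrable (prior_measure K P) (\<lambda>a. \<integral>b. exp (\<theta> * deviation N i j (a, b)) \<partial>sample_measure K)"
      using PS.integrable_fst'[OF int] by simp
    show "AE a in prior_measure K P. (\<integral>b. exp (\<theta> * deviation N i j (a, b)) \<partial>sample_measure K) \<le> exp (\<theta>\<^sup>2 / (4 * N))"
      using AE_prior_mean_01[OF vp ij(1)] AE_prior_mean_01[OF vp ij(2)]
      by eventually_elim (rule integral_exp_deviation_samples_le[OF ij N])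
  qed simp
  finally show ?thesis by (simp add: Q.prob_space)
qed

lemma excess_le_exp:
  fixes z \<eta> l :: real
  assumes "0 < l"
  shows "max (\<bar>z\<bar> - \<eta>) 0 \<le> exp (- l * \<eta>) / l * (exp (l * z) + exp (- l * z))"
proof -
  have "l * (\<bar>z\<bar> - \<eta>) \<le> exp (l * (\<bar>z\<bar> - \<eta>))"
    using exp_ge_add_one_self[of "l * (\<bar>z\<bar> - \<eta>)"] by linarith
  also have "exp (l * (\<bar>z\<bar> - \<eta>)) = exp (- l * \<eta>) * exp (l * \<bar>z\<bar>)"
    by (simp add: mult_exp_exp algebra_simps)
  finally have "\<bar>z\<bar> - \<eta> \<le> exp (- l * \<eta>) / l * exp (l * \<bar>z\<bar>)"
    using assms by (simp add: pos_le_divide_eq mult.commute)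
  moreover have "exp (l * \<bar>z\<bar>) \<le> exp (l * z) + exp (- l * z)"
    by (cases "0 \<le> z") (simp_all add: add_increasing add_increasing2)
  moreover have "0 \<le> exp (- l * \<eta>) / l" using assms by simp
  ultimately have "\<bar>z\<bar> - \<eta> \<le> exp (- l * \<eta>) / l * (exp (l * z) + exp (- l * z))"
    by (meson mult_left_mono order_trans)
  moreover have "0 \<le> exp (- l * \<eta>) / l * (exp (l * z) + exp (- l * z))" using assms by simp
  ultimately show ?thesis by simp
qed

lemma integral_excess_deviation_le:
  assumes vp: "valid_priors K P" and ij: "i < K" "j < K" "i \<noteq> j" and N: "0 < N" and \<eta>: "0 < \<eta>"
  shows "(\<integral>x. max (\<bar>deviation N i j x\<bar> - \<eta>) 0 \<partial>env_measure K P) \<le> exp (- (N * \<eta>\<^sup>2)) / (N * \<eta>)"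
proof -
  interpret E: prob_space "env_measure K P" using prob_space_env_measure[OF vp] .
  define l where "l = 2 * N * \<eta>"
  have l: "0 < l" using N \<eta> by (simp add: l_def)
  note [measurable] = measurable_deviation[OF vp ij(1,2), of N]
  have int_exp: "integrable (env_measure K P) (\<lambda>x. exp (c * deviation N i j x))" for c
    using abs_exp_mult_deviation_le by (intro E.integrable_const_bound[where B="exp (2 * \<bar>c\<bar>)"] AE_I2) auto
  have "(\<integral>x. max (\<bar>deviation N i j x\<bar> - \<eta>) 0 \<partial>env_measure K P)
      \<le> (\<integral>x. exp (- l * \<eta>) / l * (exp (l * deviation N i j x) + exp (- l * deviation N i j x)) \<partial>env_measure K P)"
  proof (rule integral_mono)
    show "integrable (env_measure K P) (\<lambda>x. max (\<bar>deviation N i j x\<bar> - \<eta>) 0)"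
    proof (intro E.integrable_const_bound[where B=2] AE_I2)
      show "norm (max (\<bar>deviation N i j x\<bar> - \<eta>) 0) \<le> 2" for x
        using abs_deviation_le[of N i j x] \<eta> by simp
    qed measurable
    show "integrable (env_measure K P)
        (\<lambda>x. exp (- l * \<eta>) / l * (exp (l * deviation N i j x) + exp (- l * deviation N i j x)))"
      using int_exp[of l] int_exp[of "- l"] by (intro integrable_mult_right Bochner_Integration.integrable_add) auto
  qed (rule excess_le_exp[OF l])
  also have "\<dots> = exp (- l * \<eta>) / l * ((\<integral>x. exp (l * deviation N i j x) \<partial>env_measure K P)
      + (\<integral>x. exp (- l * deviation N i j x) \<partial>env_measure K P))"
    using Bochner_Integration.integral_add[OF int_exp[of l] int_exp[of "- l"]] by simp
  also have "\<dots> \<le> exp (- l * \<eta>) / l * (exp (l\<^sup>2 / (4 * N)) + exp ((- l)\<^sup>2 / (4 * N)))"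
    using l by (intro mult_left_mono add_mono integral_exp_deviation_le[OF vp ij N]) auto
  also have "\<dots> = exp (- (N * \<eta>\<^sup>2)) / (N * \<eta>)"
  proof -
    have "exp (- l * \<eta>) * exp (l\<^sup>2 / (4 * N)) = exp (- (N * \<eta>\<^sup>2))"
      unfolding mult_exp_exp l_def using N by (simp add: power2_eq_square field_simps)
    then show ?thesis using N \<eta> by (simp add: l_def field_simps)
  qed
  finally show ?thesis .
qed

section \<open>The sample size and the main theorem\<close>

lemma measurable_mean:
  assumes "valid_priors K P" "k < K"
  shows "(\<lambda>\<omega>. mean \<omega> k) \<in> borel_measurable (world K P S)"
  using measurable_compose[OF measurable_env measurable_env_mean[OF assms]] by (simp add: mean_def env_def)

lemma AE_world_mean_01:
  assumes vp: "valid_priors K P" and S: "prob_space S" and k: "k < K"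
  shows "AE \<omega> in world K P S. mean \<omega> k \<in> {0..1}"
proof -
  interpret US: prob_space "sample_measure K \<Otimes>\<^sub>M S"
    using prob_space_sample_measure S by (intro prob_space_pair) auto
  have "AE m in distr (world K P S) (prior_measure K P) fst. m k \<in> {0..1}"
    unfolding world_eq_pair US.distr_pair_fst by (rule AE_prior_mean_01[OF vp k])
  then have "AE \<omega> in world K P S. fst \<omega> k \<in> {0..1}"
    by (rule AE_distrD[rotated]) (simp add: world_eq_pair)
  then show ?thesis by (simp add: mean_def)
qed

lemma sets_recommend_event:
  assumes vp: "valid_priors K P" and va: "valid_alg K S A"
  shows "{\<omega> \<in> space (world K P S). recommend A \<omega> t = i} \<in> sets (world K P S)"
proof -
  have "{\<omega> \<in> space (world K P S). recommend A \<omega> t = i}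
      = (\<Union>h\<in>histories K t. {\<omega> \<in> space (world K P S). history A \<omega> t = h \<and> recommend A \<omega> t \<in> {i}
          \<and> env \<omega> \<in> space (env_measure K P)})"
    using history_in_histories[OF va] by (auto dest: space_world_D)
  also have "\<dots> \<in> sets (world K P S)"
    by (rule sets.finite_UN[OF finite_histories sets_history_event[OF vp va _ sets.top]])
  finally show ?thesis .
qed

lemma gap_eq_mean_diff_AE:
  assumes vp: "valid_priors K P" and S: "prob_space S" and ij: "i < K" "j < K"
  shows "AE \<omega> in world K P S. gap i j (fst (env \<omega>)) = mean \<omega> i - mean \<omega> j"
  using AE_world_mean_01[OF vp S ij(1)] AE_world_mean_01[OF vp S ij(2)]
  by eventually_elim (simp add: gap_def clip01_id mean_def env_def)

lemma eps_TS_le: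
  assumes vp: "valid_priors K P" and S: "prob_space S" and ij: "i < K" "j < K" "i \<noteq> j"
  shows "eps_TS K P S \<le> (\<integral>x. max (gap i j (fst x)) 0 \<partial>env_measure K P)"
proof -
  have "finite {(\<integral>\<omega>. max (mean \<omega> i - mean \<omega> j) 0 \<partial>world K P S) | i j. i < K \<and> j < K \<and> i \<noteq> j}"
    by (rule finite_subset[of _ "(\<lambda>(i, j). \<integral>\<omega>. max (mean \<omega> i - mean \<omega> j) 0 \<partial>world K P S) ` ({..<K} \<times> {..<K})"]) auto
  then have "eps_TS K P S \<le> (\<integral>\<omega>. max (mean \<omega> i - mean \<omega> j) 0 \<partial>world K P S)"
    unfolding eps_TS_def using ij by (intro Min_le) fastforce+
  also have "\<dots> = (\<integral>\<omega>. max (gap i j (fst (env \<omega>))) 0 \<partial>world K P S)"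
    using gap_eq_mean_diff_AE[OF vp S ij(1,2)] measurable_mean[OF vp ij(1)] measurable_mean[OF vp ij(2)]
      measurable_compose[OF measurable_env measurable_gap_env[OF vp ij(1,2)]]
    by (intro integral_cong_AE) (auto elim: eventually_mono)
  also have "\<dots> = (\<integral>x. max (gap i j (fst x)) 0 \<partial>env_measure K P)"
    using measurable_gap_env[OF vp ij(1,2)] abs_gap_le[of i j]
    by (intro integral_world_env[OF vp S, where c=1]) (auto simp: abs_le_iff)
  finally show ?thesis .
qed

lemma measure_best_arm_event:
  assumes vp: "valid_priors K P" and S: "prob_space S" and i: "i < K"
  shows "measure (world K P S) {\<omega> \<in> space (world K P S). best_arm K \<omega> = i} = measure (env_measure K P) (best_envs K P i)"
proof -
  have "{\<omega> \<in> space (world K P S). best_arm K \<omega> = i}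
      = {\<omega> \<in> space (world K P S). seed_of \<omega> \<in> space S \<and> env \<omega> \<in> best_envs K P i}"
    by (auto simp: best_arm_eq best_envs_def dest: space_world_D)
  then show ?thesis
    using measure_world_seed_env[OF vp S sets.top sets_best_envs[OF vp i]] prob_space.prob_space[OF S] by simp
qed

lemma delta_TS_le:
  assumes vp: "valid_priors K P" and S: "prob_space S" and i: "i < K"
  shows "delta_TS K P S \<le> measure (env_measure K P) (best_envs K P i)"
  unfolding delta_TS_def measure_best_arm_event[OF vp S i, symmetric] using i by (intro Min_le) auto

lemma delta_TS_le_half:
  assumes vp: "valid_priors K P" and S: "prob_space S" and K: "2 \<le> K"
  shows "delta_TS K P S \<le> 1 / 2"
proof -
  interpret E: prob_space "env_measure K P" using prob_space_env_measure[OF vp] .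
  have "best_envs K P 0 \<inter> best_envs K P 1 = {}" by (auto simp: best_envs_def)
  then have "measure (env_measure K P) (best_envs K P 0) + measure (env_measure K P) (best_envs K P 1)
      = measure (env_measure K P) (best_envs K P 0 \<union> best_envs K P 1)"
    using K sets_best_envs[OF vp] by (intro E.finite_measure_Union[symmetric]) auto
  also have "\<dots> \<le> 1" by (rule E.prob_le_1)
  finally show ?thesis using delta_TS_le[OF vp S, of 0] delta_TS_le[OF vp S, of 1] K by linarith
qed

lemma sample_size_bound:
  fixes \<epsilon> \<delta> q E N :: real
  assumes \<epsilon>: "0 < \<epsilon>" and \<delta>: "0 < \<delta>" "\<delta> \<le> 1 / 2" "\<delta> \<le> q" and E: "\<epsilon> \<le> E"
    and N: "64 / \<epsilon>\<^sup>2 * ln (1 / \<delta>) \<le> N"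
  shows "2 * (\<epsilon> / 4) * q + exp (- (N * (\<epsilon> / 4)\<^sup>2)) / (N * (\<epsilon> / 4)) \<le> E * q"
proof -
  define L where "L = ln (1 / \<delta>)"
  have "ln \<delta> \<le> \<delta> - 1" using \<delta> by (intro ln_le_minus_one) auto
  then have L: "1 / 2 \<le> L" using \<delta> by (simp add: L_def ln_div)
  have NL: "64 * L \<le> N * \<epsilon>\<^sup>2" using N \<epsilon> by (simp add: L_def field_simps)
  have "- (N * (\<epsilon> / 4)\<^sup>2) \<le> - 4 * L" using NL by (simp add: power2_eq_square field_simps)
  then have "exp (- (N * (\<epsilon> / 4)\<^sup>2)) \<le> exp (- 4 * L)" by simp
  also have "- 4 * L = real 4 * ln \<delta>" unfolding L_def using \<delta> by (simp add: ln_div)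
  also have "exp (real 4 * ln \<delta>) = \<delta> ^ 4" using \<delta> by (simp only: exp_of_nat_mult exp_ln)
  finally have exp_le: "exp (- (N * (\<epsilon> / 4)\<^sup>2)) \<le> \<delta> ^ 4" .
  have "32 \<le> N * \<epsilon>\<^sup>2" using NL L by linarith
  then have "8 / \<epsilon> \<le> N * (\<epsilon> / 4)" using \<epsilon> by (simp add: power2_eq_square field_simps)
  then have "exp (- (N * (\<epsilon> / 4)\<^sup>2)) / (N * (\<epsilon> / 4)) \<le> \<delta> ^ 4 / (8 / \<epsilon>)"
    using exp_le \<epsilon> by (intro frac_le) auto
  also have "\<dots> \<le> \<epsilon> * q / 2"
  proof -
    have "\<delta> ^ 4 \<le> \<delta>" using power_decreasing[of 1 4 \<delta>] \<delta> by simp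
    then have "\<delta> ^ 4 * \<epsilon> \<le> q * \<epsilon>" using \<delta> \<epsilon> by (intro mult_right_mono) auto
    then show ?thesis using \<epsilon> \<delta> by (simp add: divide_simps)
  qed
  finally have "2 * (\<epsilon> / 4) * q + exp (- (N * (\<epsilon> / 4)\<^sup>2)) / (N * (\<epsilon> / 4)) \<le> \<epsilon> * q" by simp
  also have "\<dots> \<le> E * q" using E \<delta> by (intro mult_right_mono) auto
  finally show ?thesis .
qed

lemma thompson_recommendation_nonneg:
  assumes vp: "valid_priors K P" and S: "prob_space S" and va: "valid_alg K S A"
    and ij: "i < K" "j < K" and \<epsilon>: "0 < eps_TS K P S" and \<delta>: "0 < delta_TS K P S"
    and counts: "AE \<omega> in world K P S. \<forall>k<K.
      64 / (eps_TS K P S)\<^sup>2 * ln (1 / delta_TS K P S) \<le> real (num_samples A \<omega> t k)"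
    and thompson: "\<And>h. 0 < measure (world K P S) {\<omega> \<in> space (world K P S). history A \<omega> t = h} \<Longrightarrow>
       measure (world K P S) {\<omega> \<in> space (world K P S). history A \<omega> t = h \<and> recommend A \<omega> t = i}
       = measure (world K P S) {\<omega> \<in> space (world K P S). history A \<omega> t = h \<and> best_arm K \<omega> = i}"
  shows "0 \<le> (\<integral>\<omega>. indicator {\<omega> \<in> space (world K P S). recommend A \<omega> t = i} \<omega> * (mean \<omega> i - mean \<omega> j) \<partial>world K P S)"
proof (cases "i = j")
  case False
  let ?R = "{\<omega> \<in> space (world K P S). recommend A \<omega> t = i}" and ?E = "env_measure K P"
  let ?\<epsilon> = "eps_TS K P S" and ?\<delta> = "delta_TS K P S"
  define N where "N = nat \<lceil>64 / ?\<epsilon>\<^sup>2 * ln (1 / ?\<delta>)\<rceil>"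
  have \<delta>_half: "?\<delta> \<le> 1 / 2" using delta_TS_le_half[OF vp S] ij False by simp
  have "0 < 64 / ?\<epsilon>\<^sup>2 * ln (1 / ?\<delta>)" using \<epsilon> \<delta> \<delta>_half by simp
  then have N: "64 / ?\<epsilon>\<^sup>2 * ln (1 / ?\<delta>) \<le> N" "0 < N" by (auto simp: N_def)
  have counts_N: "AE \<omega> in world K P S. N \<le> num_samples A \<omega> t i \<and> N \<le> num_samples A \<omega> t j"
    using counts by eventually_elim (use ij in \<open>auto simp: N_def nat_le_iff ceiling_le_iff\<close>)
  have "(\<integral>x. indicator (best_envs K P i) x * gap i j (fst x) \<partial>?E) - 2 * (?\<epsilon> / 4) * measure ?E (best_envs K P i)
      - (\<integral>x. max (\<bar>deviation N i j x\<bar> - ?\<epsilon> / 4) 0 \<partial>?E)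
      \<le> (\<integral>\<omega>. indicator ?R \<omega> * gap i j (fst (env \<omega>)) \<partial>world K P S)"
    using \<epsilon> by (intro thompson_gap_lower_bound[OF vp S va ij _ _ counts_N] thompson) simp_all
  moreover note best_gap_correlation[OF vp ij False]
    integral_excess_deviation_le[OF vp ij False N(2), of "?\<epsilon> / 4"]
    sample_size_bound[OF \<epsilon> \<delta> \<delta>_half delta_TS_le[OF vp S ij(1)] eps_TS_le[OF vp S ij False] N(1)]
  ultimately have "0 \<le> (\<integral>\<omega>. indicator ?R \<omega> * gap i j (fst (env \<omega>)) \<partial>world K P S)"
    using \<epsilon> by simp
  also have "\<dots> = (\<integral>\<omega>. indicator ?R \<omega> * (mean \<omega> i - mean \<omega> j) \<partial>world K P S)"
    using gap_eq_mean_diff_AE[OF vp S ij] sets_recommend_event[OF vp va] measurable_mean[OF vp ij(1)]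
      measurable_mean[OF vp ij(2)] measurable_compose[OF measurable_env measurable_gap_env[OF vp ij]]
    by (intro integral_cong_AE) (auto elim: eventually_mono)
  finally show ?thesis .
qed simp

lemma recommend_eq_if_agree:
  assumes "\<forall>t'<T0. A t' = B t'" and "t < T0"
  shows "recommend A \<omega> t = recommend B \<omega> t"
  using assms history_eq_if_agree[of t A B \<omega>] by (simp add: recommend_def)

lemma AE_num_samples_ge_after:
  assumes agree: "\<forall>t'<T0. A t' = B t'" and t: "T0 \<le> t"
    and counts: "AE \<omega> in M. \<forall>i<K. c \<le> real (num_samples B \<omega> T0 i)"
  shows "AE \<omega> in M. \<forall>i<K. c \<le> real (num_samples A \<omega> t i)"
  using counts
proof eventually_elim
  case (elim \<omega>)
  have "num_samples B \<omega> T0 i \<le> num_samples A \<omega> t i" for i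
    using history_eq_if_agree[of T0 A B \<omega>] agree num_samples_mono[OF t, of A \<omega> i]
    by (simp add: num_samples_def)
  then show ?case using elim by (meson of_nat_le_iff order_trans)
qed

lemma BIC_if_thompson_after:
  assumes vp: "valid_priors K P" and S: "prob_space S" and bic: "BIC K P S ALG"
    and \<epsilon>: "0 < eps_TS K P S" and \<delta>: "0 < delta_TS K P S"
    and counts: "AE \<omega> in world K P S. \<forall>i<K.
      64 / (eps_TS K P S)\<^sup>2 * ln (1 / delta_TS K P S) \<le> real (num_samples ALG \<omega> T0 i)"
    and va: "valid_alg K S Alg" and agree: "\<forall>t<T0. Alg t = ALG t" and thompson: "thompson_from K P S T0 Alg"
  shows "BIC K P S Alg"
  unfolding BIC_def
proof (intro allI impI)
  fix t i j
  assume ij: "i < K" "j < K" and pos: "measure (world K P S) {\<omega> \<in> space (world K P S). recommend Alg \<omega> t = i} > 0"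
  show "cond_exp_event (world K P S) (\<lambda>\<omega>. mean \<omega> i - mean \<omega> j) {\<omega> \<in> space (world K P S). recommend Alg \<omega> t = i} \<ge> 0"
  proof (cases "t < T0")
    case True
    then show ?thesis
      using bic ij pos recommend_eq_if_agree[OF agree True] unfolding BIC_def by simp
  next
    case False
    then have "T0 \<le> t" by simp
    from thompson_recommendation_nonneg[OF vp S va ij \<epsilon> \<delta> AE_num_samples_ge_after[OF agree this counts]]
    show ?thesis
      using thompson \<open>T0 \<le> t\<close> ij pos unfolding thompson_from_def cond_exp_event_def
      by (intro divide_nonneg_pos) auto
  qed
qed

theorem theorem3p1:
  shows "\<exists>C::real > 0. \<forall>K P S ALG Alg (T0::nat).
     valid_priors K P \<and> prob_space S \<and>
     valid_alg K S ALG \<and> BIC K P S ALG \<and>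
     eps_TS K P S > 0 \<and> delta_TS K P S > 0 \<and>
     (AE \<omega> in world K P S. \<forall>i<K.
        real (num_samples ALG \<omega> T0 i) \<ge> C / (eps_TS K P S)\<^sup>2 * ln (1 / delta_TS K P S)) \<and>
     valid_alg K S Alg \<and> (\<forall>t<T0. Alg t = ALG t) \<and> thompson_from K P S T0 Alg
     \<longrightarrow> BIC K P S Alg"
  by (intro exI[of _ "64::real"] conjI allI impI) (simp, elim conjE, rule BIC_if_thompson_after)

end
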